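(* Let $M$ be a smooth manifold of dimension $n\geq 2$ and let $F$ be a Finsler structure on $M$ whose $\chi$-curvature vanishes identically on $T_0M$. Let $\mathcal{E}^i_j=2F g^{ik}E_{kj}$ and write its characteristic polynomial as $\det\left(\mathcal{E}^i_j+\Lambda\delta^i_j\right)=\sum_{a=0}^{n} g_a\Lambda^{n-a}$ (so $g_0=1$ and $g_n=0$). Then the $n-1$ functions $$f_a=\operatorname{Tr}\left(\mathcal{E}^a\right),\qquad a\in\{1,2,\dots,n-1\},$$ and the coefficients $g_a$, $a\in\{1,\dots,n-1\}$, are $0$-homogeneous first integrals of the geodesic spray $G$, i.e. $G(f_a)=0$ and $G(g_a)=0$ for all $a\in\{1,\dots,n-1\}$.
   Context: $M$ is a smooth $n$-manifold, $T_0M=TM\setminus\{0\}$, with induced coordinates $(x^i,y^i)$. A Finsler structure is a function $F:TM\to[0,\infty)$, continuous, positively $1$-homogeneous in $y$, smooth on $T_0M$, such that $g_{ij}=\frac12\frac{\partial^2F^2}{\partial y^i\partial y^j}$ is non-degenerate on $T_0M$; $g^{ij}$ denotes the inverse matrix. The geodesic spray is $G=y^i\frac{\partial}{\partial x^i}-2G^i\frac{\partial}{\partial y^i}$ with $G^i=\frac14 g^{ij}\left(\frac{\partial^2F^2}{\partial y^j\partial x^k}y^k-\frac{\partial F^2}{\partial x^j}\right)$. The Berwald curvature is $B^i_{jkl}=\frac{\partial^3G^i}{\partial y^j\partial y^k\partial y^l}$ and the mean Berwald curvature is $E_{ij}=\frac12 B^k_{ijk}$. $\mathcal{E}$ is viewed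 as the $n\times n$ matrix-valued function $(\mathcal{E}^i_j)$ on $T_0M$, $\mathcal{E}^a$ is its $a$-th matrix power and $\operatorname{Tr}$ the matrix trace. Fix a volume form $\sigma(x)\,dx\wedge dy$ on $TM$ with $\sigma$ depending only on $x$; the distortion is $\tau=\frac12\ln\frac{\det(g_{ij})}{\sigma}$ and the $S$-function is $S=G(\tau)$. The $\chi$-curvature is the $1$-form $\chi=\frac12\left\{G\left(\frac{\partial S}{\partial y^i}\right)-\frac{\partial S}{\partial x^i}\right\}dx^i$. A function $f$ on $T_0M$ is a first integral of $G$ if $G(f)=0$. *)

theory Defs
  imports "HOL-Analysis.Analysis"
begin

text \<open>Local (chart) setting: M is an open set U of real^'n, n = CARD('n);
 a point of TM is a pair (x,y) with x in U, y in real^'n.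
 Functions on TM are curried functions real^'n => real^'n => real.\<close>

type_synonym 'n tfun = "real^'n \<Rightarrow> real^'n \<Rightarrow> real"

definition dx :: "'n::finite \<Rightarrow> 'n tfun \<Rightarrow> 'n tfun" where
  "dx i f x y = deriv (\<lambda>t. f (x + t *\<^sub>R axis i 1) y) 0"

definition dy :: "'n::finite \<Rightarrow> 'n tfun \<Rightarrow> 'n tfun" where
  "dy i f x y = deriv (\<lambda>t. f x (y + t *\<^sub>R axis i 1)) 0"

fun apply_ops :: "('n::finite + 'n) list \<Rightarrow> 'n tfun \<Rightarrow> 'n tfun" where
  "apply_ops [] f = f"
| "apply_ops (Inl i # ops) f = dx i (apply_ops ops f)"
| "apply_ops (Inr i # ops) f = dy i (apply_ops ops f)"

text \<open>C^infinity on the open set T_0U = U x (real^'n - {0}): every iterated partial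
 derivative is (Frechet) differentiable there.\<close>
definition smooth_T0 :: "(real^'n::finite) set \<Rightarrow> 'n tfun \<Rightarrow> bool" where
  "smooth_T0 U f \<longleftrightarrow> (\<forall>ops x y. x \<in> U \<and> y \<noteq> 0 \<longrightarrow>
      (\<lambda>p. apply_ops ops f (fst p) (snd p)) differentiable (at (x, y)))"

definition finsler :: "(real^'n::finite) set \<Rightarrow> 'n tfun \<Rightarrow> bool" where
  "finsler U F \<longleftrightarrow> open U \<and>
     continuous_on (U \<times> UNIV) (\<lambda>p. F (fst p) (snd p)) \<and>
     (\<forall>x\<in>U. \<forall>y. F x y \<ge> 0) \<and>
     (\<forall>x\<in>U. \<forall>y. \<forall>c>0. F x (c *\<^sub>R y) = c * F x y) \<and>
     smooth_T0 U F \<and>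
     (\<forall>x\<in>U. \<forall>y. y \<noteq> 0 \<longrightarrow>
        det (\<chi> i j. (1/2) * dy i (dy j (\<lambda>x y. (F x y)\<^sup>2)) x y) \<noteq> 0)"

definition gmat :: "'n tfun \<Rightarrow> real^'n::finite \<Rightarrow> real^'n \<Rightarrow> real^'n^'n" where
  "gmat F x y = (\<chi> i j. (1/2) * dy i (dy j (\<lambda>x y. (F x y)\<^sup>2)) x y)"

definition ginv :: "'n tfun \<Rightarrow> real^'n::finite \<Rightarrow> real^'n \<Rightarrow> real^'n^'n" where
  "ginv F x y = matrix_inv (gmat F x y)"

definition sprayG :: "'n tfun \<Rightarrow> 'n::finite \<Rightarrow> 'n tfun" where
  "sprayG F i x y = (1/4) * (\<Sum>j\<in>UNIV. ginv F x y $ i $ j *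
      ((\<Sum>k\<in>UNIV. dx k (dy j (\<lambda>x y. (F x y)\<^sup>2)) x y * y $ k)
       - dx j (\<lambda>x y. (F x y)\<^sup>2) x y))"

definition spray :: "'n::finite tfun \<Rightarrow> 'n tfun \<Rightarrow> 'n tfun" where
  "spray F f x y = (\<Sum>i\<in>UNIV. y $ i * dx i f x y)
                   - 2 * (\<Sum>i\<in>UNIV. sprayG F i x y * dy i f x y)"

definition berwald :: "'n tfun \<Rightarrow> 'n::finite \<Rightarrow> 'n \<Rightarrow> 'n \<Rightarrow> 'n \<Rightarrow> 'n tfun" where
  "berwald F i j k l = dy j (dy k (dy l (sprayG F i)))"

definition meanE :: "'n tfun \<Rightarrow> 'n::finite \<Rightarrow> 'n \<Rightarrow> 'n tfun" where
  "meanE F i j x y = (1/2) * (\<Sum>k\<in>UNIV. berwald F k i j k x y)"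

definition distortion :: "(real^'n \<Rightarrow> real) \<Rightarrow> 'n::finite tfun \<Rightarrow> 'n tfun" where
  "distortion \<sigma> F x y = (1/2) * ln (\<bar>det (gmat F x y)\<bar> / \<sigma> x)"

definition Sfun :: "(real^'n \<Rightarrow> real) \<Rightarrow> 'n::finite tfun \<Rightarrow> 'n tfun" where
  "Sfun \<sigma> F = spray F (distortion \<sigma> F)"

definition chi :: "(real^'n \<Rightarrow> real) \<Rightarrow> 'n::finite tfun \<Rightarrow> 'n \<Rightarrow> 'n tfun" where
  "chi \<sigma> F i x y = (1/2) * (spray F (dy i (Sfun \<sigma> F)) x y - dx i (Sfun \<sigma> F) x y)"

definition Emat :: "'n tfun \<Rightarrow> real^'n::finite \<Rightarrow> real^'n \<Rightarrow> real^'n^'n" where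
  "Emat F x y = (\<chi> i j. 2 * F x y * (\<Sum>k\<in>UNIV. ginv F x y $ i $ k * meanE F k j x y))"

fun matpow :: "real^'n::finite^'n \<Rightarrow> nat \<Rightarrow> real^'n^'n" where
  "matpow A 0 = mat 1"
| "matpow A (Suc m) = A ** matpow A m"

end

theory Submission
  imports Defs "HOL-Computational_Algebra.Polynomial"
begin

text \<open>Write \<open>N\<^sup>i\<^sub>j = \<partial>G\<^sup>i/\<partial>y\<^sup>j\<close>. If a function \<open>u\<close> satisfies
  \<open>G(\<partial>u/\<partial>y\<^sup>i) = \<partial>u/\<partial>x\<^sup>i\<close> for all \<open>i\<close>, then differentiating once more in \<open>y\<close> and using the
  symmetry of mixed partials gives the tensorial law
  \<open>G(\<partial>\<^sup>2u/\<partial>y\<^sup>i\<partial>y\<^sup>j) = N\<^sup>l\<^sub>i \<partial>\<^sup>2u/\<partial>y\<^sup>l\<partial>y\<^sup>j + N\<^sup>l\<^sub>j \<partial>\<^sup>2u/\<partial>y\<^sup>i\<partial>y\<^sup>l\<close>.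
  The hypothesis holds for \<open>u = F\<^sup>2\<close> (this is what the spray coefficients are made for) and,
  when \<open>\<chi> = 0\<close>, for \<open>u = S\<close>; moreover \<open>E\<^sub>i\<^sub>j = \<onehalf> \<partial>\<^sup>2S/\<partial>y\<^sup>i\<partial>y\<^sup>j\<close>. Hence
  \<open>G(g) = N\<^sup>Tg + gN\<close> and \<open>G(E) = N\<^sup>TE + EN\<close>, so \<open>G(g\<^sup>-\<^sup>1) = -(g\<^sup>-\<^sup>1N\<^sup>T + Ng\<^sup>-\<^sup>1)\<close>, and since
  \<open>G(F) = 0\<close> the matrix \<open>\<E> = 2F g\<^sup>-\<^sup>1E\<close> obeys the Lax equation \<open>G(\<E>) = \<E>N - N\<E>\<close>.
  Therefore \<open>G\<close> kills \<open>Tr(\<E>\<^sup>a)\<close> and, by Jacobi's formula, \<open>det(\<E> + \<Lambda>I)\<close> for every \<open>\<Lambda>\<close>;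
  comparing coefficients in \<open>\<Lambda>\<close> gives \<open>G(g\<^sub>a) = 0\<close>. Zero-homogeneity of \<open>\<E>\<close> follows from the
  degrees 1, 0 and 2 of \<open>F\<close>, \<open>g\<close> and \<open>G\<^sup>i\<close>, each \<open>y\<close>-derivative lowering the degree by one.\<close>

section \<open>Directional derivatives on the slit tangent bundle\<close>

definition uncurried :: "'n tfun \<Rightarrow> (real^'n::finite) \<times> (real^'n) \<Rightarrow> real" where
  "uncurried f p = f (fst p) (snd p)"

definition dderiv :: "(real^'n) \<times> (real^'n) \<Rightarrow> 'n::finite tfun \<Rightarrow> 'n tfun" where
  "dderiv u f x y = deriv (\<lambda>t. uncurried f ((x, y) + t *\<^sub>R u)) 0"

definition tf_differentiable :: "'n::finite tfun \<Rightarrow> real^'n \<Rightarrow> real^'n \<Rightarrow> bool" where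
  "tf_differentiable f x y \<longleftrightarrow> uncurried f differentiable at (x, y)"

abbreviation tf_deriv :: "'n::finite tfun \<Rightarrow> real^'n \<Rightarrow> real^'n \<Rightarrow> (real^'n) \<times> (real^'n) \<Rightarrow> real" where
  "tf_deriv f x y \<equiv> frechet_derivative (uncurried f) (at (x, y))"

definition T0 :: "(real^'n::finite) set \<Rightarrow> ((real^'n) \<times> (real^'n)) set" where
  "T0 U = U \<times> (UNIV - {0})"

definition eq_on_T0 :: "(real^'n::finite) set \<Rightarrow> 'n tfun \<Rightarrow> 'n tfun \<Rightarrow> bool" where
  "eq_on_T0 U f g \<longleftrightarrow> (\<forall>x y. x \<in> U \<longrightarrow> y \<noteq> 0 \<longrightarrow> f x y = g x y)"

definition coord_dir :: "(real^'n::finite) \<times> (real^'n) \<Rightarrow> bool" where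
  "coord_dir u \<longleftrightarrow> (\<exists>i. u = (axis i 1, 0)) \<or> (\<exists>i. u = (0, axis i 1))"

lemma dx_eq_dderiv: "dx i f = dderiv (axis i 1, 0) f"
  by (intro ext) (simp add: dx_def dderiv_def uncurried_def)

lemma dy_eq_dderiv: "dy i f = dderiv (0, axis i 1) f"
  by (intro ext) (simp add: dy_def dderiv_def uncurried_def)

lemma uncurried_eta: "uncurried f = (\<lambda>p. f (fst p) (snd p))"
  by (simp add: uncurried_def fun_eq_iff)

lemma uncurried_simps [simp]:
  "uncurried (\<lambda>x y. f x y + g x y) = (\<lambda>p. uncurried f p + uncurried g p)"
  "uncurried (\<lambda>x y. f x y * g x y) = (\<lambda>p. uncurried f p * uncurried g p)"
  "uncurried (\<lambda>x y. c) = (\<lambda>p. c)"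
  "uncurried (\<lambda>x y. inverse (f x y)) = (\<lambda>p. inverse (uncurried f p))"
  "uncurried (\<lambda>x y. ln (f x y)) = (\<lambda>p. ln (uncurried f p))"
  by (auto simp: uncurried_def)

lemma has_derivative_imp_line_derivative:
  fixes \<phi> :: "'a::real_normed_vector \<Rightarrow> real"
  assumes "(\<phi> has_derivative \<phi>') (at (q + t0 *\<^sub>R u))"
  shows "((\<lambda>t. \<phi> (q + t *\<^sub>R u)) has_real_derivative \<phi>' u) (at t0)"
proof -
  have "((\<lambda>t. q + t *\<^sub>R u) has_derivative (\<lambda>s. s *\<^sub>R u)) (at t0)"
    by (auto intro!: derivative_eq_intros)
  from has_derivative_compose[OF this assms]
  have "((\<lambda>t. \<phi> (q + t *\<^sub>R u)) has_derivative (\<lambda>s. \<phi>' (s *\<^sub>R u))) (at t0)" .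
  moreover have "(\<lambda>s. \<phi>' (s *\<^sub>R u)) = (*) (\<phi>' u)"
    using has_derivative_linear[OF assms] by (auto simp: linear_cmul)
  ultimately show ?thesis by (simp add: has_field_derivative_def)
qed

lemma tf_differentiable_has_derivative:
  "tf_differentiable f x y \<Longrightarrow> (uncurried f has_derivative tf_deriv f x y) (at (x, y))"
  by (simp add: tf_differentiable_def frechet_derivative_works)

lemma dderiv_eq_has_derivative:
  assumes "(uncurried f has_derivative f') (at (x, y))"
  shows "dderiv u f x y = f' u"
  unfolding dderiv_def
  by (rule DERIV_imp_deriv, rule has_derivative_imp_line_derivative) (simp add: assms)

lemma dderiv_eq_tf_deriv: "tf_differentiable f x y \<Longrightarrow> dderiv u f x y = tf_deriv f x y u"
  by (rule dderiv_eq_has_derivative) (rule tf_differentiable_has_derivative)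

lemma dderiv_has_real_derivative:
  "tf_differentiable f x y \<Longrightarrow>
     ((\<lambda>t. uncurried f ((x, y) + t *\<^sub>R u)) has_real_derivative dderiv u f x y) (at 0)"
  using has_derivative_imp_line_derivative[of "uncurried f" "tf_deriv f x y" "(x, y)" 0 u]
  by (simp add: tf_differentiable_has_derivative dderiv_eq_tf_deriv)

lemma tf_differentiable_add:
  "tf_differentiable f x y \<Longrightarrow> tf_differentiable g x y \<Longrightarrow> tf_differentiable (\<lambda>x y. f x y + g x y) x y"
  by (auto simp: tf_differentiable_def)

lemma tf_differentiable_mult:
  "tf_differentiable f x y \<Longrightarrow> tf_differentiable g x y \<Longrightarrow> tf_differentiable (\<lambda>x y. f x y * g x y) x y"
  by (auto simp: tf_differentiable_def)

lemma tf_differentiable_const: "tf_differentiable (\<lambda>x y. c) x y"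
  by (auto simp: tf_differentiable_def)

lemma tf_differentiable_inverse:
  assumes "tf_differentiable f x y" "f x y \<noteq> 0"
  shows "tf_differentiable (\<lambda>x y. inverse (f x y)) x y"
proof -
  have "((\<lambda>p. inverse (uncurried f p)) has_derivative
      (\<lambda>h. - (inverse (uncurried f (x, y)) * tf_deriv f x y h * inverse (uncurried f (x, y)))))
      (at (x, y))"
    using assms by (intro Deriv.has_derivative_inverse tf_differentiable_has_derivative)
      (simp_all add: uncurried_def)
  then show ?thesis unfolding tf_differentiable_def differentiable_def by auto
qed

lemma tf_differentiable_ln:
  assumes "tf_differentiable f x y" "f x y > 0"
  shows "tf_differentiable (\<lambda>x y. ln (f x y)) x y"
proof -
  have "((\<lambda>p. ln (uncurried f p)) has_derivative
      (\<lambda>h. tf_deriv f x y h * inverse (uncurried f (x, y)))) (at (x, y))"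
    using assms by (intro has_derivative_ln tf_differentiable_has_derivative)
      (simp_all add: uncurried_def)
  then show ?thesis unfolding tf_differentiable_def differentiable_def by auto
qed

lemma tf_differentiable_coord_y: "tf_differentiable (\<lambda>x y. y $ k) x y"
proof -
  have "bounded_linear (\<lambda>p::(real^'a) \<times> (real^'a). snd p $ k)"
    by (intro bounded_linear_compose[OF bounded_linear_vec_nth] bounded_linear_snd)
  then show ?thesis
    unfolding tf_differentiable_def uncurried_eta by (simp add: bounded_linear_imp_differentiable)
qed

lemma dderiv_add:
  assumes "tf_differentiable f x y" "tf_differentiable g x y"
  shows "dderiv u (\<lambda>x y. f x y + g x y) x y = dderiv u f x y + dderiv u g x y"
proof -
  have "(uncurried (\<lambda>x y. f x y + g x y) has_derivative
      (\<lambda>h. tf_deriv f x y h + tf_deriv g x y h)) (at (x, y))"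
    using assms by (simp add: has_derivative_add tf_differentiable_has_derivative)
  from dderiv_eq_has_derivative[OF this] show ?thesis
    using assms by (simp add: dderiv_eq_tf_deriv)
qed

lemma dderiv_mult:
  assumes "tf_differentiable f x y" "tf_differentiable g x y"
  shows "dderiv u (\<lambda>x y. f x y * g x y) x y = f x y * dderiv u g x y + dderiv u f x y * g x y"
proof -
  have "(uncurried (\<lambda>x y. f x y * g x y) has_derivative
      (\<lambda>h. uncurried f (x, y) * tf_deriv g x y h + tf_deriv f x y h * uncurried g (x, y))) (at (x, y))"
    using assms by (simp add: has_derivative_mult tf_differentiable_has_derivative)
  from dderiv_eq_has_derivative[OF this] show ?thesis
    using assms by (simp add: dderiv_eq_tf_deriv uncurried_def)
qed

lemma dderiv_const: "dderiv u (\<lambda>x y. c) x y = 0"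
  by (simp add: dderiv_def uncurried_def)

lemma dderiv_inverse:
  assumes "tf_differentiable f x y" "f x y \<noteq> 0"
  shows "dderiv u (\<lambda>x y. inverse (f x y)) x y = - dderiv u f x y * inverse (f x y) * inverse (f x y)"
proof -
  have "(uncurried (\<lambda>x y. inverse (f x y)) has_derivative
      (\<lambda>h. - (inverse (uncurried f (x, y)) * tf_deriv f x y h * inverse (uncurried f (x, y)))))
      (at (x, y))"
    using assms
    by (simp, intro Deriv.has_derivative_inverse tf_differentiable_has_derivative)
      (simp_all add: uncurried_def)
  from dderiv_eq_has_derivative[OF this] show ?thesis
    using assms by (simp add: dderiv_eq_tf_deriv uncurried_def)
qed

lemma dderiv_ln:
  assumes "tf_differentiable f x y" "f x y > 0"
  shows "dderiv u (\<lambda>x y. ln (f x y)) x y = dderiv u f x y * inverse (f x y)"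
proof -
  have "(uncurried (\<lambda>x y. ln (f x y)) has_derivative
      (\<lambda>h. tf_deriv f x y h * inverse (uncurried f (x, y)))) (at (x, y))"
    using assms
    by (simp, intro has_derivative_ln tf_differentiable_has_derivative) (simp_all add: uncurried_def)
  from dderiv_eq_has_derivative[OF this] show ?thesis
    using assms by (simp add: dderiv_eq_tf_deriv uncurried_def)
qed

lemma dderiv_coord_y: "dderiv u (\<lambda>x y. y $ k) x y = snd u $ k"
proof -
  have "((\<lambda>t. y $ k + t * snd u $ k) has_real_derivative snd u $ k) (at 0)"
    by (auto intro!: derivative_eq_intros)
  then show ?thesis unfolding dderiv_def uncurried_def by (simp add: DERIV_imp_deriv)
qed

lemma open_T0: "open U \<Longrightarrow> open (T0 U)"
  unfolding T0_def by (intro open_Times) auto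

lemma eq_on_T0_uncurried: "eq_on_T0 U f g \<Longrightarrow> p \<in> T0 U \<Longrightarrow> uncurried f p = uncurried g p"
  by (cases p) (auto simp: eq_on_T0_def T0_def uncurried_def)

lemma eq_on_T0_refl [simp]: "eq_on_T0 U f f"
  by (simp add: eq_on_T0_def)

lemma eq_on_T0_sym: "eq_on_T0 U f g \<Longrightarrow> eq_on_T0 U g f"
  by (simp add: eq_on_T0_def)

lemma eq_on_T0_trans: "eq_on_T0 U f g \<Longrightarrow> eq_on_T0 U g h \<Longrightarrow> eq_on_T0 U f h"
  by (simp add: eq_on_T0_def)

lemma eventually_line_in_open:
  fixes p :: "'a::real_normed_vector"
  assumes "open S" "p \<in> S"
  shows "\<forall>\<^sub>F t in nhds (0::real). p + t *\<^sub>R u \<in> S"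
proof -
  have "continuous_on UNIV (\<lambda>t::real. p + t *\<^sub>R u)" by (intro continuous_intros)
  then have "open ((\<lambda>t. p + t *\<^sub>R u) -` S)" using assms(1) open_vimage by blast
  from eventually_nhds_in_open[OF this, of 0] show ?thesis using assms(2) by simp
qed

lemma dderiv_cong:
  assumes "open U" "eq_on_T0 U f g" "x \<in> U" "y \<noteq> 0"
  shows "dderiv u f x y = dderiv u g x y"
proof -
  have "\<forall>\<^sub>F t in nhds 0. (x, y) + t *\<^sub>R u \<in> T0 U"
    by (rule eventually_line_in_open) (use assms open_T0 in \<open>auto simp: T0_def\<close>)
  then have "\<forall>\<^sub>F t in nhds 0. uncurried f ((x, y) + t *\<^sub>R u) = uncurried g ((x, y) + t *\<^sub>R u)"
    by eventually_elim (use assms eq_on_T0_uncurried in blast)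
  then have "DERIV (\<lambda>t. uncurried f ((x, y) + t *\<^sub>R u)) 0 :> D \<longleftrightarrow>
      DERIV (\<lambda>t. uncurried g ((x, y) + t *\<^sub>R u)) 0 :> D" for D
    by (intro DERIV_cong_ev) auto
  then show ?thesis unfolding dderiv_def deriv_def by simp
qed

lemma eq_on_T0_dderiv: "open U \<Longrightarrow> eq_on_T0 U f g \<Longrightarrow> eq_on_T0 U (dderiv u f) (dderiv u g)"
  using dderiv_cong unfolding eq_on_T0_def by blast

lemma tf_differentiable_cong:
  assumes "open U" "eq_on_T0 U f g" "x \<in> U" "y \<noteq> 0" "tf_differentiable f x y"
  shows "tf_differentiable g x y"
proof -
  have "(uncurried g has_derivative tf_deriv f x y) (at (x, y))"
    by (rule has_derivative_transform_within_open
          [OF tf_differentiable_has_derivative[OF assms(5)] open_T0[OF assms(1)]])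
       (use assms in \<open>auto simp: T0_def intro: eq_on_T0_uncurried\<close>)
  then show ?thesis unfolding tf_differentiable_def by (auto simp: differentiable_def)
qed

section \<open>Smooth functions on the slit tangent bundle\<close>

lemma apply_ops_append: "apply_ops (ops @ ops') f = apply_ops ops (apply_ops ops' f)"
proof (induction ops)
  case (Cons op ops) then show ?case by (cases op) auto
qed simp

lemma smooth_T0_differentiable:
  assumes "smooth_T0 U f" "x \<in> U" "y \<noteq> 0"
  shows "tf_differentiable f x y"
proof -
  have "(\<lambda>p. apply_ops [] f (fst p) (snd p)) differentiable at (x, y)"
    using assms unfolding smooth_T0_def by blast
  then show ?thesis by (simp add: tf_differentiable_def uncurried_eta)
qed

lemma smooth_T0_dx:
  fixes f :: "'n::finite tfun"
  shows "smooth_T0 U f \<Longrightarrow> smooth_T0 U (dx i f)"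
  unfolding smooth_T0_def
proof (intro allI impI)
  fix ops and x y :: "real^'n"
  assume f: "\<forall>ops x y. x \<in> U \<and> y \<noteq> 0 \<longrightarrow>
      (\<lambda>p. apply_ops ops f (fst p) (snd p)) differentiable at (x, y)" and xy: "x \<in> U \<and> y \<noteq> 0"
  have "apply_ops ops (dx i f) = apply_ops (ops @ [Inl i]) f" by (simp add: apply_ops_append)
  then show "(\<lambda>p. apply_ops ops (dx i f) (fst p) (snd p)) differentiable at (x, y)"
    using f xy by metis
qed

lemma smooth_T0_dy:
  fixes f :: "'n::finite tfun"
  shows "smooth_T0 U f \<Longrightarrow> smooth_T0 U (dy i f)"
  unfolding smooth_T0_def
proof (intro allI impI)
  fix ops and x y :: "real^'n"
  assume f: "\<forall>ops x y. x \<in> U \<and> y \<noteq> 0 \<longrightarrow>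
      (\<lambda>p. apply_ops ops f (fst p) (snd p)) differentiable at (x, y)" and xy: "x \<in> U \<and> y \<noteq> 0"
  have "apply_ops ops (dy i f) = apply_ops (ops @ [Inr i]) f" by (simp add: apply_ops_append)
  then show "(\<lambda>p. apply_ops ops (dy i f) (fst p) (snd p)) differentiable at (x, y)"
    using f xy by metis
qed

lemma smooth_T0_dderiv: "smooth_T0 U f \<Longrightarrow> coord_dir u \<Longrightarrow> smooth_T0 U (dderiv u f)"
  unfolding coord_dir_def
  by (auto simp: smooth_T0_dx smooth_T0_dy dx_eq_dderiv[symmetric] dy_eq_dderiv[symmetric])

lemma eq_on_T0_apply_ops:
  "open U \<Longrightarrow> eq_on_T0 U f g \<Longrightarrow> eq_on_T0 U (apply_ops ops f) (apply_ops ops g)"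
proof (induction ops)
  case (Cons op ops) then show ?case
    by (cases op) (auto simp: dx_eq_dderiv dy_eq_dderiv intro: eq_on_T0_dderiv)
qed simp

lemma smooth_T0_cong:
  fixes f g :: "'n::finite tfun"
  assumes "open U" "smooth_T0 U f" "eq_on_T0 U f g"
  shows "smooth_T0 U g"
  unfolding smooth_T0_def
proof (intro allI impI)
  fix ops and x y :: "real^'n" assume xy: "x \<in> U \<and> y \<noteq> 0"
  have "tf_differentiable (apply_ops ops f) x y"
    using assms(2) xy unfolding smooth_T0_def tf_differentiable_def uncurried_eta by auto
  then have "tf_differentiable (apply_ops ops g) x y"
    using tf_differentiable_cong[OF assms(1) eq_on_T0_apply_ops[OF assms(1,3)]] xy by blast
  then show "(\<lambda>p. apply_ops ops g (fst p) (snd p)) differentiable at (x, y)"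
    by (simp add: tf_differentiable_def uncurried_eta)
qed

text \<open>Closure properties of \<^const>\<open>smooth_T0\<close> are obtained by showing that every coordinate
  derivative of an algebraic combination of smooth functions is again such a combination.\<close>

inductive smooth_closure :: "(real^'n::finite) set \<Rightarrow> 'n tfun \<Rightarrow> bool" for U where
  smooth: "smooth_T0 U f \<Longrightarrow> smooth_closure U f"
| const: "smooth_closure U (\<lambda>x y. c)"
| coord_y: "smooth_closure U (\<lambda>x y. y $ k)"
| add: "smooth_closure U f \<Longrightarrow> smooth_closure U g \<Longrightarrow> smooth_closure U (\<lambda>x y. f x y + g x y)"
| mult: "smooth_closure U f \<Longrightarrow> smooth_closure U g \<Longrightarrow> smooth_closure U (\<lambda>x y. f x y * g x y)"
| inverse: "smooth_closure U f \<Longrightarrow> (\<forall>x y. x \<in> U \<longrightarrow> y \<noteq> 0 \<longrightarrow> f x y \<noteq> 0) \<Longrightarrow>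
    smooth_closure U (\<lambda>x y. inverse (f x y))"
| ln: "smooth_closure U f \<Longrightarrow> (\<forall>x y. x \<in> U \<longrightarrow> y \<noteq> 0 \<longrightarrow> f x y > 0) \<Longrightarrow>
    smooth_closure U (\<lambda>x y. ln (f x y))"

lemma smooth_closure_differentiable:
  "smooth_closure U f \<Longrightarrow> x \<in> U \<Longrightarrow> y \<noteq> 0 \<Longrightarrow> tf_differentiable f x y"
  by (induction rule: smooth_closure.induct)
     (auto simp: smooth_T0_differentiable tf_differentiable_const tf_differentiable_coord_y
        tf_differentiable_add tf_differentiable_mult tf_differentiable_inverse tf_differentiable_ln)

lemma smooth_closure_dderiv:
  assumes "smooth_closure U f" "coord_dir u"
  shows "\<exists>h. smooth_closure U h \<and> eq_on_T0 U (dderiv u f) h"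
  using assms(1)
proof induction
  case (smooth f)
  show ?case
    by (rule exI[of _ "dderiv u f"])
       (simp add: smooth_closure.smooth smooth_T0_dderiv smooth assms(2))
next
  case const
  show ?case
    by (rule exI[of _ "\<lambda>x y. 0"]) (simp add: eq_on_T0_def dderiv_const smooth_closure.const)
next
  case (coord_y k)
  show ?case
    by (rule exI[of _ "\<lambda>x y. snd u $ k"])
       (simp add: eq_on_T0_def dderiv_coord_y smooth_closure.const)
next
  case (add f g)
  then obtain h1 h2 where h: "smooth_closure U h1" "eq_on_T0 U (dderiv u f) h1"
      "smooth_closure U h2" "eq_on_T0 U (dderiv u g) h2" by blast
  let ?h' = "\<lambda>x y. h1 x y + h2 x y"
  have "smooth_closure U ?h'"
    using h(1,3) add.hyps by (intro smooth_closure.add)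
  moreover have "eq_on_T0 U (dderiv u (\<lambda>x y. f x y + g x y)) ?h'"
    using h(2,4) add.hyps by (simp add: eq_on_T0_def dderiv_add smooth_closure_differentiable)
  ultimately show ?case by (intro exI[of _ ?h'] conjI)
next
  case (mult f g)
  then obtain h1 h2 where h: "smooth_closure U h1" "eq_on_T0 U (dderiv u f) h1"
      "smooth_closure U h2" "eq_on_T0 U (dderiv u g) h2" by blast
  let ?h' = "\<lambda>x y. f x y * h2 x y + h1 x y * g x y"
  have "smooth_closure U ?h'"
    using h(1,3) mult.hyps by (intro smooth_closure.add smooth_closure.mult)
  moreover have "eq_on_T0 U (dderiv u (\<lambda>x y. f x y * g x y)) ?h'"
    using h(2,4) mult.hyps by (simp add: eq_on_T0_def dderiv_mult smooth_closure_differentiable)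
  ultimately show ?case by (intro exI[of _ ?h'] conjI)
next
  case (inverse f)
  then obtain h where h: "smooth_closure U h" "eq_on_T0 U (dderiv u f) h" by blast
  let ?h' = "\<lambda>x y. ((-1) * h x y) * inverse (f x y) * inverse (f x y)"
  have "smooth_closure U ?h'"
    using h(1) inverse.hyps by (intro smooth_closure.mult smooth_closure.const smooth_closure.inverse)
  moreover have "eq_on_T0 U (dderiv u (\<lambda>x y. inverse (f x y))) ?h'"
    using h(2) inverse.hyps
    by (simp add: eq_on_T0_def dderiv_inverse smooth_closure_differentiable)
  ultimately show ?case by (intro exI[of _ ?h'] conjI)
next
  case (ln f)
  then obtain h where h: "smooth_closure U h" "eq_on_T0 U (dderiv u f) h" by blast
  let ?h' = "\<lambda>x y. h x y * inverse (f x y)"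
  have "\<forall>x y. x \<in> U \<longrightarrow> y \<noteq> 0 \<longrightarrow> f x y \<noteq> 0"
    using ln.hyps(2) by force
  then have "smooth_closure U ?h'"
    using h(1) ln.hyps by (intro smooth_closure.mult smooth_closure.inverse)
  moreover have "eq_on_T0 U (dderiv u (\<lambda>x y. ln (f x y))) ?h'"
    using h(2) ln.hyps by (simp add: eq_on_T0_def dderiv_ln smooth_closure_differentiable)
  ultimately show ?case by (intro exI[of _ ?h'] conjI)
qed

lemma smooth_closure_smooth_T0:
  fixes f :: "'n::finite tfun"
  assumes "open U" "smooth_closure U f"
  shows "smooth_T0 U f"
proof -
  have "\<exists>h. smooth_closure U h \<and> eq_on_T0 U (apply_ops ops f) h" for ops
  proof (induction ops)
    case (Cons op ops)
    then obtain h where h: "smooth_closure U h" "eq_on_T0 U (apply_ops ops f) h" by blast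
    obtain u where u: "coord_dir u" "apply_ops (op # ops) f = dderiv u (apply_ops ops f)"
      by (cases op) (auto simp: coord_dir_def dx_eq_dderiv dy_eq_dderiv)
    obtain h' where "smooth_closure U h'" "eq_on_T0 U (dderiv u h) h'"
      using smooth_closure_dderiv[OF h(1) u(1)] by blast
    with eq_on_T0_dderiv[OF assms(1) h(2)] u show ?case
      using eq_on_T0_trans by metis
  qed (use assms in auto)
  then show ?thesis
    unfolding smooth_T0_def
  proof (intro allI impI)
    fix ops and x y :: "real^'n" assume "\<And>ops. \<exists>h. smooth_closure U h \<and> eq_on_T0 U (apply_ops ops f) h"
      and xy: "x \<in> U \<and> y \<noteq> 0"
    then obtain h where "smooth_closure U h" "eq_on_T0 U (apply_ops ops f) h" by blast
    then have "tf_differentiable (apply_ops ops f) x y"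
      using smooth_closure_differentiable tf_differentiable_cong[OF assms(1) eq_on_T0_sym] xy by blast
    then show "(\<lambda>p. apply_ops ops f (fst p) (snd p)) differentiable at (x, y)"
      unfolding tf_differentiable_def uncurried_eta .
  qed
qed

context
  fixes U :: "(real^'n::finite) set"
  assumes open_U: "open U"
begin

lemma smooth_T0_add: "smooth_T0 U f \<Longrightarrow> smooth_T0 U g \<Longrightarrow> smooth_T0 U (\<lambda>x y. f x y + g x y)"
  by (rule smooth_closure_smooth_T0[OF open_U]) (intro smooth_closure.add smooth_closure.smooth)

lemma smooth_T0_mult: "smooth_T0 U f \<Longrightarrow> smooth_T0 U g \<Longrightarrow> smooth_T0 U (\<lambda>x y. f x y * g x y)"
  by (rule smooth_closure_smooth_T0[OF open_U]) (intro smooth_closure.mult smooth_closure.smooth)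

lemma smooth_T0_const: "smooth_T0 U (\<lambda>x y. c)"
  by (rule smooth_closure_smooth_T0[OF open_U]) (rule smooth_closure.const)

lemma smooth_T0_coord_y: "smooth_T0 U (\<lambda>x y. y $ k)"
  by (rule smooth_closure_smooth_T0[OF open_U]) (rule smooth_closure.coord_y)

lemma smooth_T0_inverse:
  "smooth_T0 U f \<Longrightarrow> (\<forall>x y. x \<in> U \<longrightarrow> y \<noteq> 0 \<longrightarrow> f x y \<noteq> 0) \<Longrightarrow>
     smooth_T0 U (\<lambda>x y. inverse (f x y))"
  by (rule smooth_closure_smooth_T0[OF open_U]) (intro smooth_closure.inverse smooth_closure.smooth)

lemma smooth_T0_ln:
  "smooth_T0 U f \<Longrightarrow> (\<forall>x y. x \<in> U \<longrightarrow> y \<noteq> 0 \<longrightarrow> f x y > 0) \<Longrightarrow> smooth_T0 U (\<lambda>x y. ln (f x y))"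
  by (rule smooth_closure_smooth_T0[OF open_U]) (intro smooth_closure.ln smooth_closure.smooth)

lemma smooth_T0_cmult: "smooth_T0 U f \<Longrightarrow> smooth_T0 U (\<lambda>x y. c * f x y)"
  using smooth_T0_mult[OF smooth_T0_const] by blast

lemma smooth_T0_minus: "smooth_T0 U f \<Longrightarrow> smooth_T0 U (\<lambda>x y. - f x y)"
  using smooth_T0_cmult[of f "-1"] by simp

lemma smooth_T0_diff: "smooth_T0 U f \<Longrightarrow> smooth_T0 U g \<Longrightarrow> smooth_T0 U (\<lambda>x y. f x y - g x y)"
  using smooth_T0_add[OF _ smooth_T0_minus, of f g] by simp

lemma smooth_T0_divide:
  "smooth_T0 U f \<Longrightarrow> smooth_T0 U g \<Longrightarrow> (\<forall>x y. x \<in> U \<longrightarrow> y \<noteq> 0 \<longrightarrow> g x y \<noteq> 0) \<Longrightarrow>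
     smooth_T0 U (\<lambda>x y. f x y / g x y)"
  using smooth_T0_mult[OF _ smooth_T0_inverse, of f g] by (simp add: divide_inverse)

lemma smooth_T0_sum:
  "finite A \<Longrightarrow> (\<And>a. a \<in> A \<Longrightarrow> smooth_T0 U (f a)) \<Longrightarrow> smooth_T0 U (\<lambda>x y. \<Sum>a\<in>A. f a x y)"
  by (induction A rule: finite_induct) (simp_all add: smooth_T0_const smooth_T0_add)

lemma smooth_T0_prod:
  "finite A \<Longrightarrow> (\<And>a. a \<in> A \<Longrightarrow> smooth_T0 U (f a)) \<Longrightarrow> smooth_T0 U (\<lambda>x y. \<Prod>a\<in>A. f a x y)"
  by (induction A rule: finite_induct) (simp_all add: smooth_T0_const smooth_T0_mult)

lemma smooth_T0_det:
  "(\<And>i j. smooth_T0 U (\<lambda>x y. M x y $ i $ j)) \<Longrightarrow> smooth_T0 U (\<lambda>x y. det (M x y))"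
  unfolding det_def
  by (intro smooth_T0_sum smooth_T0_cmult smooth_T0_prod) (auto simp: finite_permutations)

end

section \<open>Symmetry of mixed partial derivatives\<close>

lemma double_difference_mvt:
  fixes f f\<^sub>1 f\<^sub>1\<^sub>2 :: "real \<Rightarrow> real \<Rightarrow> real"
  assumes h: "h > 0"
    and D1: "\<And>s t. 0 \<le> s \<Longrightarrow> s \<le> h \<Longrightarrow> 0 \<le> t \<Longrightarrow> t \<le> h \<Longrightarrow>
      ((\<lambda>s. f s t) has_real_derivative f\<^sub>1 s t) (at s)"
    and D2: "\<And>s t. 0 \<le> s \<Longrightarrow> s \<le> h \<Longrightarrow> 0 \<le> t \<Longrightarrow> t \<le> h \<Longrightarrow>
      ((\<lambda>t. f\<^sub>1 s t) has_real_derivative f\<^sub>1\<^sub>2 s t) (at t)"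
  obtains \<xi> \<eta> where "0 < \<xi>" "\<xi> < h" "0 < \<eta>" "\<eta> < h"
    "f h h - f h 0 - f 0 h + f 0 0 = h * h * f\<^sub>1\<^sub>2 \<xi> \<eta>"
proof -
  have "((\<lambda>s. f s h - f s 0) has_real_derivative f\<^sub>1 s h - f\<^sub>1 s 0) (at s)"
    if "0 \<le> s" "s \<le> h" for s
    using h that by (auto intro!: DERIV_diff D1)
  from MVT2[OF h this] obtain \<xi> where \<xi>: "0 < \<xi>" "\<xi> < h"
    "f h h - f h 0 - (f 0 h - f 0 0) = (h - 0) * (f\<^sub>1 \<xi> h - f\<^sub>1 \<xi> 0)" by blast
  have "((\<lambda>t. f\<^sub>1 \<xi> t) has_real_derivative f\<^sub>1\<^sub>2 \<xi> t) (at t)" if "0 \<le> t" "t \<le> h" for t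
    using \<xi> that by (auto intro!: D2)
  from MVT2[OF h this] obtain \<eta> where \<eta>: "0 < \<eta>" "\<eta> < h"
    "f\<^sub>1 \<xi> h - f\<^sub>1 \<xi> 0 = (h - 0) * f\<^sub>1\<^sub>2 \<xi> \<eta>" by blast
  show ?thesis using that[OF \<xi>(1,2) \<eta>(1,2)] \<xi>(3) \<eta>(3) by (simp add: algebra_simps)
qed

lemma has_real_derivative_along_line:
  fixes \<phi> :: "'a::real_normed_vector \<Rightarrow> real"
  assumes "((\<lambda>t. \<phi> ((p + s *\<^sub>R u) + t *\<^sub>R u)) has_real_derivative D) (at 0)"
  shows "((\<lambda>s. \<phi> (p + s *\<^sub>R u)) has_real_derivative D) (at s)"
proof -
  have "(\<lambda>t. \<phi> ((p + s *\<^sub>R u) + t *\<^sub>R u)) = (\<lambda>t. \<phi> (p + (t + s) *\<^sub>R u))"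
    by (simp add: algebra_simps)
  with assms show ?thesis using DERIV_shift[of "\<lambda>s. \<phi> (p + s *\<^sub>R u)" D 0 s] by simp
qed

lemma mixed_derivatives_meet:
  fixes \<phi> P R Q T :: "'a::real_normed_vector \<Rightarrow> real"
  assumes h: "h > 0"
    and square: "\<And>s t. 0 \<le> s \<Longrightarrow> s \<le> h \<Longrightarrow> 0 \<le> t \<Longrightarrow> t \<le> h \<Longrightarrow> q + s *\<^sub>R u + t *\<^sub>R v \<in> S"
    and dP: "\<And>p. p \<in> S \<Longrightarrow> ((\<lambda>t. \<phi> (p + t *\<^sub>R u)) has_real_derivative P p) (at 0)"
    and dR: "\<And>p. p \<in> S \<Longrightarrow> ((\<lambda>t. \<phi> (p + t *\<^sub>R v)) has_real_derivative R p) (at 0)"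
    and dQ: "\<And>p. p \<in> S \<Longrightarrow> ((\<lambda>t. P (p + t *\<^sub>R v)) has_real_derivative Q p) (at 0)"
    and dT: "\<And>p. p \<in> S \<Longrightarrow> ((\<lambda>t. R (p + t *\<^sub>R u)) has_real_derivative T p) (at 0)"
  obtains \<xi> \<eta> \<xi>' \<eta>' where "\<xi> \<in> {0<..<h}" "\<eta> \<in> {0<..<h}" "\<xi>' \<in> {0<..<h}" "\<eta>' \<in> {0<..<h}"
    "Q (q + \<xi> *\<^sub>R u + \<eta> *\<^sub>R v) = T (q + \<xi>' *\<^sub>R u + \<eta>' *\<^sub>R v)"
proof -
  have swap: "q + s *\<^sub>R u + t *\<^sub>R v = (q + t *\<^sub>R v) + s *\<^sub>R u" for s t
    by (simp add: algebra_simps)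
  obtain \<xi> \<eta> where \<xi>\<eta>: "0 < \<xi>" "\<xi> < h" "0 < \<eta>" "\<eta> < h"
    "\<phi> (q + h *\<^sub>R u + h *\<^sub>R v) - \<phi> (q + h *\<^sub>R u + 0 *\<^sub>R v) - \<phi> (q + 0 *\<^sub>R u + h *\<^sub>R v)
       + \<phi> (q + 0 *\<^sub>R u + 0 *\<^sub>R v) = h * h * Q (q + \<xi> *\<^sub>R u + \<eta> *\<^sub>R v)"
  proof (rule double_difference_mvt[OF h, where f = "\<lambda>s t. \<phi> (q + s *\<^sub>R u + t *\<^sub>R v)"])
    fix s t :: real assume st: "0 \<le> s" "s \<le> h" "0 \<le> t" "t \<le> h"
    show "((\<lambda>s. \<phi> (q + s *\<^sub>R u + t *\<^sub>R v)) has_real_derivative P (q + s *\<^sub>R u + t *\<^sub>R v)) (at s)"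
      unfolding swap by (rule has_real_derivative_along_line)
        (use dP[OF square[OF st]] in \<open>simp add: swap\<close>)
    show "((\<lambda>t. P (q + s *\<^sub>R u + t *\<^sub>R v)) has_real_derivative Q (q + s *\<^sub>R u + t *\<^sub>R v)) (at t)"
      by (rule has_real_derivative_along_line) (use dQ[OF square[OF st]] in simp)
  qed
  obtain \<eta>' \<xi>' where \<eta>'\<xi>': "0 < \<eta>'" "\<eta>' < h" "0 < \<xi>'" "\<xi>' < h"
    "\<phi> (q + h *\<^sub>R u + h *\<^sub>R v) - \<phi> (q + 0 *\<^sub>R u + h *\<^sub>R v) - \<phi> (q + h *\<^sub>R u + 0 *\<^sub>R v)
       + \<phi> (q + 0 *\<^sub>R u + 0 *\<^sub>R v) = h * h * T (q + \<xi>' *\<^sub>R u + \<eta>' *\<^sub>R v)"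
  proof (rule double_difference_mvt[OF h, where f = "\<lambda>t s. \<phi> (q + s *\<^sub>R u + t *\<^sub>R v)"])
    fix t s :: real assume ts: "0 \<le> t" "t \<le> h" "0 \<le> s" "s \<le> h"
    show "((\<lambda>t. \<phi> (q + s *\<^sub>R u + t *\<^sub>R v)) has_real_derivative R (q + s *\<^sub>R u + t *\<^sub>R v)) (at t)"
      by (rule has_real_derivative_along_line) (use dR[OF square[OF ts(3,4,1,2)]] in simp)
    show "((\<lambda>s. R (q + s *\<^sub>R u + t *\<^sub>R v)) has_real_derivative T (q + s *\<^sub>R u + t *\<^sub>R v)) (at s)"
      unfolding swap
      by (rule has_real_derivative_along_line) (use dT[OF square[OF ts(3,4,1,2)]] in \<open>simp add: swap\<close>)
  qed
  have "Q (q + \<xi> *\<^sub>R u + \<eta> *\<^sub>R v) = T (q + \<xi>' *\<^sub>R u + \<eta>' *\<^sub>R v)"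
    using \<xi>\<eta>(5) \<eta>'\<xi>'(5) h by (simp add: algebra_simps)
  with \<xi>\<eta> \<eta>'\<xi>' that show ?thesis by simp
qed

lemma mixed_directional_derivatives_eq:
  fixes \<phi> P R Q T :: "'a::real_normed_vector \<Rightarrow> real"
  assumes S: "open S" "q \<in> S"
    and dP: "\<And>p. p \<in> S \<Longrightarrow> ((\<lambda>t. \<phi> (p + t *\<^sub>R u)) has_real_derivative P p) (at 0)"
    and dR: "\<And>p. p \<in> S \<Longrightarrow> ((\<lambda>t. \<phi> (p + t *\<^sub>R v)) has_real_derivative R p) (at 0)"
    and dQ: "\<And>p. p \<in> S \<Longrightarrow> ((\<lambda>t. P (p + t *\<^sub>R v)) has_real_derivative Q p) (at 0)"
    and dT: "\<And>p. p \<in> S \<Longrightarrow> ((\<lambda>t. R (p + t *\<^sub>R u)) has_real_derivative T p) (at 0)"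
    and cQ: "continuous (at q) Q" and cT: "continuous (at q) T"
  shows "Q q = T q"
proof -
  obtain \<delta> where \<delta>: "\<delta> > 0" "ball q \<delta> \<subseteq> S" using S open_contains_ball by blast
  have near: "\<exists>p\<^sub>1 p\<^sub>2. dist p\<^sub>1 q < m \<and> dist p\<^sub>2 q < m \<and> Q p\<^sub>1 = T p\<^sub>2" if m: "0 < m" "m \<le> \<delta>" for m
  proof -
    define h where "h = m / (norm u + norm v + 1)"
    have nuv: "norm u + norm v + 1 > 0" by (simp add: add_nonneg_pos)
    have h: "h > 0" using m nuv by (simp add: h_def)
    have close: "dist (q + s *\<^sub>R u + t *\<^sub>R v) q < m" if "0 \<le> s" "s \<le> h" "0 \<le> t" "t \<le> h" for s t
    proof -
      have "dist (q + s *\<^sub>R u + t *\<^sub>R v) q \<le> s * norm u + t * norm v"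
        using norm_triangle_ineq[of "s *\<^sub>R u" "t *\<^sub>R v"] that by (simp add: dist_norm)
      also have "\<dots> \<le> h * norm u + h * norm v"
        using that by (intro add_mono mult_right_mono) auto
      also have "\<dots> < h * (norm u + norm v + 1)" using h by (simp add: algebra_simps)
      finally show ?thesis using nuv by (simp add: h_def)
    qed
    have "q + s *\<^sub>R u + t *\<^sub>R v \<in> S" if "0 \<le> s" "s \<le> h" "0 \<le> t" "t \<le> h" for s t
      using close[OF that] m \<delta> by (auto simp: dist_commute)
    from mixed_derivatives_meet[OF h this dP dR dQ dT] obtain \<xi> \<eta> \<xi>' \<eta>'
      where "\<xi> \<in> {0<..<h}" "\<eta> \<in> {0<..<h}" "\<xi>' \<in> {0<..<h}" "\<eta>' \<in> {0<..<h}"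
        "Q (q + \<xi> *\<^sub>R u + \<eta> *\<^sub>R v) = T (q + \<xi>' *\<^sub>R u + \<eta>' *\<^sub>R v)"
      by blast
    with close show ?thesis by (metis greaterThanLessThan_iff less_eq_real_def)
  qed
  show ?thesis
  proof (rule ccontr)
    assume "Q q \<noteq> T q"
    then have \<epsilon>: "\<bar>Q q - T q\<bar> / 2 > 0" by simp
    obtain d\<^sub>1 where d\<^sub>1: "d\<^sub>1 > 0" "\<And>p. dist p q < d\<^sub>1 \<Longrightarrow> dist (Q p) (Q q) < \<bar>Q q - T q\<bar> / 2"
      using cQ \<epsilon> unfolding continuous_at_eps_delta by blast
    obtain d\<^sub>2 where d\<^sub>2: "d\<^sub>2 > 0" "\<And>p. dist p q < d\<^sub>2 \<Longrightarrow> dist (T p) (T q) < \<bar>Q q - T q\<bar> / 2"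
      using cT \<epsilon> unfolding continuous_at_eps_delta by blast
    obtain p\<^sub>1 p\<^sub>2 where p: "dist p\<^sub>1 q < min \<delta> (min d\<^sub>1 d\<^sub>2)" "dist p\<^sub>2 q < min \<delta> (min d\<^sub>1 d\<^sub>2)"
        and QT: "Q p\<^sub>1 = T p\<^sub>2"
      using near[of "min \<delta> (min d\<^sub>1 d\<^sub>2)"] \<delta> d\<^sub>1 d\<^sub>2 by auto
    have "\<bar>Q p\<^sub>1 - Q q\<bar> < \<bar>Q q - T q\<bar> / 2" "\<bar>T p\<^sub>2 - T q\<bar> < \<bar>Q q - T q\<bar> / 2"
      using d\<^sub>1(2)[of p\<^sub>1] d\<^sub>2(2)[of p\<^sub>2] p by (simp_all add: dist_real_def)
    with QT show False by (simp add: abs_less_iff abs_if split: if_splits)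
  qed
qed

lemma dderiv_has_real_derivative_T0:
  assumes "smooth_T0 U g" "p \<in> T0 U"
  shows "((\<lambda>t. uncurried g (p + t *\<^sub>R u)) has_real_derivative uncurried (dderiv u g) p) (at 0)"
proof (cases p)
  case (Pair x y)
  then have "tf_differentiable g x y"
    using assms by (auto simp: T0_def intro: smooth_T0_differentiable)
  from dderiv_has_real_derivative[OF this] show ?thesis
    by (simp add: Pair uncurried_def)
qed

lemma dderiv_commute:
  assumes U: "open U" and f: "smooth_T0 U f" and u: "coord_dir u" and v: "coord_dir v"
    and xy: "x \<in> U" "y \<noteq> 0"
  shows "dderiv v (dderiv u f) x y = dderiv u (dderiv v f) x y"
proof -
  have q: "(x, y) \<in> T0 U" using xy by (simp add: T0_def)
  have s1: "smooth_T0 U (dderiv u f)" "smooth_T0 U (dderiv v f)"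
    using smooth_T0_dderiv[OF f u] smooth_T0_dderiv[OF f v] by auto
  have s2: "smooth_T0 U (dderiv v (dderiv u f))" "smooth_T0 U (dderiv u (dderiv v f))"
    using smooth_T0_dderiv[OF s1(1) v] smooth_T0_dderiv[OF s1(2) u] by auto
  have cont: "continuous (at (x, y)) (uncurried g)" if "smooth_T0 U g" for g
    using smooth_T0_differentiable[OF that xy] unfolding tf_differentiable_def
    by (rule differentiable_imp_continuous_within)
  have "uncurried (dderiv v (dderiv u f)) (x, y) = uncurried (dderiv u (dderiv v f)) (x, y)"
    by (rule mixed_directional_derivatives_eq[OF open_T0[OF U] q,
          of "uncurried f" u "uncurried (dderiv u f)" v "uncurried (dderiv v f)"])
       (auto intro!: dderiv_has_real_derivative_T0 f s1 cont s2)
  then show ?thesis by (simp add: uncurried_def)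
qed

lemma dx_dy_commute:
  "open U \<Longrightarrow> smooth_T0 U f \<Longrightarrow> x \<in> U \<Longrightarrow> y \<noteq> 0 \<Longrightarrow> dx i (dy j f) x y = dy j (dx i f) x y"
  unfolding dx_eq_dderiv dy_eq_dderiv by (rule dderiv_commute) (auto simp: coord_dir_def)

lemma dy_dy_commute:
  "open U \<Longrightarrow> smooth_T0 U f \<Longrightarrow> x \<in> U \<Longrightarrow> y \<noteq> 0 \<Longrightarrow> dy i (dy j f) x y = dy j (dy i f) x y"
  unfolding dy_eq_dderiv by (rule dderiv_commute) (auto simp: coord_dir_def)

section \<open>Cofactors and Jacobi's formula\<close>

definition row_replace :: "'a::comm_ring_1^'n^'n \<Rightarrow> 'n::finite \<Rightarrow> 'a^'n \<Rightarrow> 'a^'n^'n" where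
  "row_replace A k v = (\<chi> i. if i = k then v else A $ i)"

definition cofactor :: "'a::comm_ring_1^'n^'n \<Rightarrow> 'n::finite \<Rightarrow> 'n \<Rightarrow> 'a" where
  "cofactor A k j = det (row_replace A k (axis j 1))"

lemma det_row_replace:
  "det (row_replace A k v) =
     (\<Sum>p | p permutes UNIV. of_int (sign p) * (v $ p k * (\<Prod>i\<in>UNIV - {k}. A $ i $ p i)))"
proof -
  have "(\<Prod>i\<in>UNIV. row_replace A k v $ i $ p i) = v $ p k * (\<Prod>i\<in>UNIV - {k}. A $ i $ p i)" for p
  proof -
    have "(\<Prod>i\<in>UNIV. row_replace A k v $ i $ p i) =
        row_replace A k v $ k $ p k * (\<Prod>i\<in>UNIV - {k}. row_replace A k v $ i $ p i)"
      by (rule prod.remove) auto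
    also have "(\<Prod>i\<in>UNIV - {k}. row_replace A k v $ i $ p i) = (\<Prod>i\<in>UNIV - {k}. A $ i $ p i)"
      by (rule prod.cong) (auto simp: row_replace_def)
    finally show ?thesis by (simp add: row_replace_def)
  qed
  then show ?thesis unfolding det_def by simp
qed

lemma cofactor_row_expansion: "(\<Sum>j\<in>UNIV. w $ j * cofactor A k j) = det (row_replace A k w)"
proof -
  have "(\<Sum>j\<in>UNIV. w $ j * cofactor A k j) =
      (\<Sum>p | p permutes UNIV. \<Sum>j\<in>UNIV.
         w $ j * (of_int (sign p) * (axis j 1 $ p k * (\<Prod>i\<in>UNIV - {k}. A $ i $ p i))))"
    unfolding cofactor_def det_row_replace sum_distrib_left by (rule sum.swap)
  also have "\<dots> = (\<Sum>p | p permutes UNIV. of_int (sign p) * (w $ p k * (\<Prod>i\<in>UNIV - {k}. A $ i $ p i)))"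
  proof (rule sum.cong[OF refl])
    fix p
    have "(\<Sum>j\<in>UNIV. w $ j * (of_int (sign p) * (axis j 1 $ p k * (\<Prod>i\<in>UNIV - {k}. A $ i $ p i)))) =
        (\<Sum>j\<in>UNIV. if j = p k then w $ j * (of_int (sign p) * (\<Prod>i\<in>UNIV - {k}. A $ i $ p i)) else 0)"
      by (rule sum.cong) (auto simp: axis_def)
    then show "(\<Sum>j\<in>UNIV. w $ j * (of_int (sign p) * (axis j 1 $ p k * (\<Prod>i\<in>UNIV - {k}. A $ i $ p i)))) =
        of_int (sign p) * (w $ p k * (\<Prod>i\<in>UNIV - {k}. A $ i $ p i))"
      by (simp add: sum.delta' algebra_simps)
  qed
  finally show ?thesis by (simp add: det_row_replace)
qed

lemma cofactor_transpose: "cofactor (transpose A) j k = cofactor A k j"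
proof -
  let ?B = "transpose (row_replace (transpose A) j (axis k 1))"
  have B: "?B $ i $ c = (if c = j then axis k 1 $ i else A $ i $ c)" for i c
    by (simp add: row_replace_def transpose_def)
  have "(\<Prod>i\<in>UNIV. row_replace A k (axis j 1) $ i $ p i) = (\<Prod>i\<in>UNIV. ?B $ i $ p i)"
    if p: "p permutes UNIV" for p
  proof (cases "p k = j")
    case True
    have pj: "p i = j \<longleftrightarrow> i = k" for i using True permutes_inj[OF p] by (metis inj_eq)
    have "(\<Prod>i\<in>UNIV. row_replace A k (axis j 1) $ i $ p i) = (\<Prod>i\<in>UNIV. if i = k then 1 else A $ i $ p i)"
      by (rule prod.cong) (auto simp: row_replace_def axis_def True)
    moreover have "(\<Prod>i\<in>UNIV. ?B $ i $ p i) = (\<Prod>i\<in>UNIV. if i = k then 1 else A $ i $ p i)"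
      by (rule prod.cong[OF refl]) (simp only: B, simp add: pj axis_def)
    ultimately show ?thesis by simp
  next
    case False
    obtain i\<^sub>0 where i\<^sub>0: "p i\<^sub>0 = j" using permutes_surj[OF p] by (metis surjD)
    with False have "i\<^sub>0 \<noteq> k" by auto
    with i\<^sub>0 have "?B $ i\<^sub>0 $ p i\<^sub>0 = 0" by (simp only: B) (simp add: axis_def)
    then have "(\<Prod>i\<in>UNIV. ?B $ i $ p i) = 0"
      by (intro prod_zero) auto
    moreover have "(\<Prod>i\<in>UNIV. row_replace A k (axis j 1) $ i $ p i) = 0"
      by (rule prod_zero) (use False in \<open>auto simp: row_replace_def axis_def intro!: bexI[of _ k]\<close>)
    ultimately show ?thesis by simp
  qed
  then have "cofactor A k j = det ?B"
    unfolding cofactor_def det_def by (intro sum.cong) auto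
  then show ?thesis by (simp add: cofactor_def det_transpose)
qed

lemma row_cofactor_sum: "(\<Sum>j\<in>UNIV. A $ l $ j * cofactor A k j) = (if l = k then det A else 0)"
proof -
  have "(\<Sum>j\<in>UNIV. A $ l $ j * cofactor A k j) = det (row_replace A k (A $ l))"
    using cofactor_row_expansion[of "A $ l" A k] by simp
  moreover have "row_replace A k (A $ k) = A" by (simp add: row_replace_def vec_eq_iff)
  moreover have "l \<noteq> k \<Longrightarrow> det (row_replace A k (A $ l)) = 0"
    by (rule det_identical_rows[of k l]) (auto simp: row_replace_def row_def vec_eq_iff)
  ultimately show ?thesis by auto
qed

lemma transpose_nth: "transpose A $ i $ j = A $ j $ i"
  by (simp add: transpose_def)

lemma col_cofactor_sum: "(\<Sum>k\<in>UNIV. A $ k $ l * cofactor A k j) = (if l = j then det A else 0)"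
  using row_cofactor_sum[of "transpose A" l j]
  by (simp add: cofactor_transpose transpose_nth det_transpose)

lemma jacobi_contraction:
  fixes A X Y :: "'a::comm_ring_1^'n::finite^'n"
  shows "(\<Sum>k\<in>UNIV. \<Sum>j\<in>UNIV. (X ** A + A ** Y) $ k $ j * cofactor A k j) = (trace X + trace Y) * det A"
proof -
  have X: "(\<Sum>k\<in>UNIV. \<Sum>j\<in>UNIV. (X ** A) $ k $ j * cofactor A k j) = trace X * det A"
  proof -
    have "(\<Sum>k\<in>UNIV. \<Sum>j\<in>UNIV. (X ** A) $ k $ j * cofactor A k j) =
        (\<Sum>k\<in>UNIV. \<Sum>l\<in>UNIV. X $ k $ l * (\<Sum>j\<in>UNIV. A $ l $ j * cofactor A k j))"
      by (simp add: matrix_matrix_mult_def sum_distrib_left sum_distrib_right mult.assoc)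
         (rule sum.cong[OF refl], rule sum.swap)
    also have "\<dots> = (\<Sum>k\<in>UNIV. X $ k $ k * det A)"
      by (simp add: row_cofactor_sum if_distrib sum.delta cong: if_cong)
    finally show ?thesis by (simp add: trace_def sum_distrib_right)
  qed
  have Y: "(\<Sum>k\<in>UNIV. \<Sum>j\<in>UNIV. (A ** Y) $ k $ j * cofactor A k j) = trace Y * det A"
  proof -
    have "(\<Sum>k\<in>UNIV. \<Sum>j\<in>UNIV. (A ** Y) $ k $ j * cofactor A k j) =
        (\<Sum>k\<in>UNIV. \<Sum>j\<in>UNIV. \<Sum>l\<in>UNIV. Y $ l $ j * (A $ k $ l * cofactor A k j))"
      by (simp add: matrix_matrix_mult_def sum_distrib_right sum_distrib_left algebra_simps)
    also have "\<dots> = (\<Sum>j\<in>UNIV. \<Sum>l\<in>UNIV. Y $ l $ j * (\<Sum>k\<in>UNIV. A $ k $ l * cofactor A k j))"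
      by (subst sum.swap, rule sum.cong[OF refl], subst sum.swap) (simp add: sum_distrib_left)
    also have "\<dots> = (\<Sum>j\<in>UNIV. Y $ j $ j * det A)"
      by (simp add: col_cofactor_sum if_distrib sum.delta cong: if_cong)
    finally show ?thesis by (simp add: trace_def sum_distrib_right)
  qed
  show ?thesis using X Y by (simp add: matrix_add_ldistrib distrib_right sum.distrib)
qed

lemma invertible_matrix_inv:
  assumes "invertible (A::'a::semiring_1^'n^'n)"
  shows "A ** matrix_inv A = mat 1" "matrix_inv A ** A = mat 1"
proof -
  have "\<exists>A'. A ** A' = mat 1 \<and> A' ** A = mat 1" using assms by (simp add: invertible_def)
  then have "A ** matrix_inv A = mat 1 \<and> matrix_inv A ** A = mat 1"
    unfolding matrix_inv_def by (rule someI_ex)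
  then show "A ** matrix_inv A = mat 1" "matrix_inv A ** A = mat 1" by auto
qed

lemma matrix_inv_cofactor:
  assumes d: "det (A::real^'n::finite^'n) \<noteq> 0"
  shows "matrix_inv A = (\<chi> i j. cofactor A j i / det A)"
proof -
  let ?X = "(\<chi> i j. cofactor A j i / det A) :: real^'n^'n"
  have "(A ** ?X) $ l $ k = mat 1 $ l $ k" for l k
    using d by (simp add: matrix_matrix_mult_def sum_divide_distrib[symmetric] row_cofactor_sum mat_def)
  then have AX: "A ** ?X = mat 1" by (simp add: vec_eq_iff)
  have inv: "invertible A" using d by (simp add: invertible_det_nz)
  have "matrix_inv A = matrix_inv A ** (A ** ?X)" by (simp add: AX)
  also have "\<dots> = ?X" by (simp add: matrix_mul_assoc invertible_matrix_inv[OF inv])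
  finally show ?thesis .
qed

lemma matrix_add_rdistrib: "((A::'a::semiring_1^'n::finite^'m) + B) ** C = A ** C + B ** C"
  by (simp add: matrix_matrix_mult_def vec_eq_iff sum.distrib distrib_right)

lemma matrix_diff_rdistrib: "((A::'a::ring_1^'n::finite^'m) - B) ** C = A ** C - B ** C"
  by (simp add: matrix_matrix_mult_def vec_eq_iff sum_subtractf left_diff_distrib)

lemma matrix_diff_ldistrib: "(A::'a::ring_1^'n::finite^'m) ** (B - C) = A ** B - A ** C"
  by (simp add: matrix_matrix_mult_def vec_eq_iff sum_subtractf right_diff_distrib)

lemma matrix_neg_lmult: "(- (A::'a::ring_1^'n::finite^'m)) ** B = - (A ** B)"
  by (simp add: matrix_matrix_mult_def vec_eq_iff sum_negf)

lemma trace_commutator: "trace ((A::'a::comm_ring_1^'n::finite^'n) ** B - B ** A) = 0"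
  unfolding trace_sub by (subst trace_mul_sym) simp

lemma trace_transpose: "trace (transpose (A::'a::semiring_1^'n::finite^'n)) = trace A"
  by (simp add: trace_def transpose_nth)

section \<open>Derivations\<close>

text \<open>The coordinate derivatives and the spray, evaluated at a point, are all derivations, so the
  matrix calculus below (product rule, Jacobi's formula) serves for each of them.\<close>

locale derivation_at =
  fixes D :: "'n::finite tfun \<Rightarrow> real" and C :: "'n tfun \<Rightarrow> bool" and x\<^sub>0 y\<^sub>0 :: "real^'n"
  assumes D_add: "C f \<Longrightarrow> C g \<Longrightarrow> D (\<lambda>x y. f x y + g x y) = D f + D g"
    and D_mult: "C f \<Longrightarrow> C g \<Longrightarrow> D (\<lambda>x y. f x y * g x y) = f x\<^sub>0 y\<^sub>0 * D g + D f * g x\<^sub>0 y\<^sub>0"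
    and D_const: "D (\<lambda>x y. c) = 0"
    and C_add: "C f \<Longrightarrow> C g \<Longrightarrow> C (\<lambda>x y. f x y + g x y)"
    and C_mult: "C f \<Longrightarrow> C g \<Longrightarrow> C (\<lambda>x y. f x y * g x y)"
    and C_const: "C (\<lambda>x y. c)"
begin

lemma C_cmult: "C f \<Longrightarrow> C (\<lambda>x y. c * f x y)"
  by (rule C_mult[OF C_const])

lemma D_cmult: "C f \<Longrightarrow> D (\<lambda>x y. c * f x y) = c * D f"
  using D_mult[OF C_const, of f c] by (simp add: D_const)

lemma C_minus: "C f \<Longrightarrow> C (\<lambda>x y. - f x y)"
  using C_cmult[of f "-1"] by simp

lemma D_minus: "C f \<Longrightarrow> D (\<lambda>x y. - f x y) = - D f"
  using D_cmult[of f "-1"] by simp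

lemma D_diff: "C f \<Longrightarrow> C g \<Longrightarrow> D (\<lambda>x y. f x y - g x y) = D f - D g"
  using D_add[OF _ C_minus, of f g] D_minus[of g] by simp

lemma C_sum: "finite A \<Longrightarrow> (\<And>a. a \<in> A \<Longrightarrow> C (f a)) \<Longrightarrow> C (\<lambda>x y. \<Sum>a\<in>A. f a x y)"
  by (induction A rule: finite_induct) (simp_all add: C_const C_add)

lemma D_sum:
  "finite A \<Longrightarrow> (\<And>a. a \<in> A \<Longrightarrow> C (f a)) \<Longrightarrow> D (\<lambda>x y. \<Sum>a\<in>A. f a x y) = (\<Sum>a\<in>A. D (f a))"
proof (induction A rule: finite_induct)
  case (insert a A)
  then have "D (\<lambda>x y. f a x y + (\<Sum>b\<in>A. f b x y)) = D (f a) + D (\<lambda>x y. \<Sum>b\<in>A. f b x y)"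
    by (intro D_add C_sum) auto
  with insert show ?case by simp
qed (simp add: D_const)

lemma C_prod: "finite A \<Longrightarrow> (\<And>a. a \<in> A \<Longrightarrow> C (f a)) \<Longrightarrow> C (\<lambda>x y. \<Prod>a\<in>A. f a x y)"
  by (induction A rule: finite_induct) (simp_all add: C_const C_mult)

lemma D_prod:
  "finite A \<Longrightarrow> (\<And>a. a \<in> A \<Longrightarrow> C (f a)) \<Longrightarrow>
     D (\<lambda>x y. \<Prod>a\<in>A. f a x y) = (\<Sum>a\<in>A. D (f a) * (\<Prod>b\<in>A - {a}. f b x\<^sub>0 y\<^sub>0))"
proof (induction A rule: finite_induct)
  case (insert a A)
  have "D (\<lambda>x y. \<Prod>b\<in>insert a A. f b x y) = D (\<lambda>x y. f a x y * (\<Prod>b\<in>A. f b x y))"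
    using insert(1,2) by simp
  also have "\<dots> = f a x\<^sub>0 y\<^sub>0 * D (\<lambda>x y. \<Prod>b\<in>A. f b x y) + D (f a) * (\<Prod>b\<in>A. f b x\<^sub>0 y\<^sub>0)"
    using insert by (intro D_mult C_prod) auto
  also have "\<dots> = (\<Sum>c\<in>A. D (f c) * (f a x\<^sub>0 y\<^sub>0 * (\<Prod>b\<in>A - {c}. f b x\<^sub>0 y\<^sub>0))) +
      D (f a) * (\<Prod>b\<in>A. f b x\<^sub>0 y\<^sub>0)"
    using insert by (simp add: sum_distrib_left algebra_simps)
  also have "\<dots> = (\<Sum>c\<in>insert a A. D (f c) * (\<Prod>b\<in>insert a A - {c}. f b x\<^sub>0 y\<^sub>0))"
  proof -
    have "insert a A - {c} = insert a (A - {c})" if "c \<in> A" for c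
      using that insert(2) by auto
    moreover have "insert a A - {a} = A" using insert(2) by auto
    ultimately show ?thesis using insert(1,2) by (simp add: add.commute)
  qed
  finally show ?case .
qed (simp add: D_const)

definition C_mat :: "(real^'n \<Rightarrow> real^'n \<Rightarrow> real^'n^'n) \<Rightarrow> bool" where
  "C_mat A \<longleftrightarrow> (\<forall>i j. C (\<lambda>x y. A x y $ i $ j))"

definition D_mat :: "(real^'n \<Rightarrow> real^'n \<Rightarrow> real^'n^'n) \<Rightarrow> real^'n^'n" where
  "D_mat A = (\<chi> i j. D (\<lambda>x y. A x y $ i $ j))"

lemma C_mat_mult: "C_mat A \<Longrightarrow> C_mat B \<Longrightarrow> C_mat (\<lambda>x y. A x y ** B x y)"
  unfolding C_mat_def matrix_matrix_mult_def by (auto intro!: C_sum C_mult)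

lemma D_mat_mult:
  "C_mat A \<Longrightarrow> C_mat B \<Longrightarrow> D_mat (\<lambda>x y. A x y ** B x y) = D_mat A ** B x\<^sub>0 y\<^sub>0 + A x\<^sub>0 y\<^sub>0 ** D_mat B"
  unfolding C_mat_def D_mat_def matrix_matrix_mult_def
  by (simp add: vec_eq_iff D_sum C_mult D_mult sum.distrib algebra_simps)

lemma D_det:
  assumes "C_mat M"
  shows "D (\<lambda>x y. det (M x y)) = (\<Sum>k\<in>UNIV. \<Sum>j\<in>UNIV. D_mat M $ k $ j * cofactor (M x\<^sub>0 y\<^sub>0) k j)"
proof -
  let ?P = "{p. p permutes (UNIV::'n set)}"
  have "D (\<lambda>x y. det (M x y)) = (\<Sum>p\<in>?P. of_int (sign p) * D (\<lambda>x y. \<Prod>i\<in>UNIV. M x y $ i $ p i))"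
    using assms unfolding det_def C_mat_def
    by (simp add: D_sum finite_permutations C_cmult C_prod D_cmult)
  also have "\<dots> = (\<Sum>p\<in>?P. of_int (sign p) *
      (\<Sum>k\<in>UNIV. D_mat M $ k $ p k * (\<Prod>i\<in>UNIV - {k}. M x\<^sub>0 y\<^sub>0 $ i $ p i)))"
    using assms unfolding C_mat_def D_mat_def by (simp add: D_prod)
  also have "\<dots> = (\<Sum>k\<in>UNIV. det (row_replace (M x\<^sub>0 y\<^sub>0) k (D_mat M $ k)))"
    unfolding det_row_replace sum_distrib_left by (rule sum.swap)
  also have "\<dots> = (\<Sum>k\<in>UNIV. \<Sum>j\<in>UNIV. D_mat M $ k $ j * cofactor (M x\<^sub>0 y\<^sub>0) k j)"
    by (simp add: cofactor_row_expansion)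
  finally show ?thesis .
qed

lemma D_det_commutator:
  assumes "C_mat M" "D_mat M = M x\<^sub>0 y\<^sub>0 ** B - B ** M x\<^sub>0 y\<^sub>0"
  shows "D (\<lambda>x y. det (M x y)) = 0"
  using D_det[OF assms(1)] jacobi_contraction[of "- B" "M x\<^sub>0 y\<^sub>0" B]
  by (simp add: assms(2) matrix_neg_lmult trace_def sum_negf)

lemma D_trace: "C_mat A \<Longrightarrow> D (\<lambda>x y. trace (A x y)) = trace (D_mat A)"
  unfolding trace_def C_mat_def D_mat_def by (simp add: D_sum)

lemma C_mat_matpow: "C_mat M \<Longrightarrow> C_mat (\<lambda>x y. matpow (M x y) a)"
  by (induction a) (simp_all add: C_mat_def mat_def C_const C_mat_mult[unfolded C_mat_def])

lemma D_mat_matpow_commutator: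
  assumes M: "C_mat M" and DM: "D_mat M = M x\<^sub>0 y\<^sub>0 ** B - B ** M x\<^sub>0 y\<^sub>0"
  shows "D_mat (\<lambda>x y. matpow (M x y) a) = matpow (M x\<^sub>0 y\<^sub>0) a ** B - B ** matpow (M x\<^sub>0 y\<^sub>0) a"
proof (induction a)
  case 0
  have "D_mat (\<lambda>x y. mat 1) = 0" by (simp add: D_mat_def mat_def D_const vec_eq_iff)
  then show ?case by simp
next
  case (Suc a)
  let ?M = "M x\<^sub>0 y\<^sub>0" and ?P = "matpow (M x\<^sub>0 y\<^sub>0) a"
  have "D_mat (\<lambda>x y. matpow (M x y) (Suc a)) = D_mat M ** ?P + ?M ** D_mat (\<lambda>x y. matpow (M x y) a)"
    by (simp add: D_mat_mult M C_mat_matpow)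
  also have "\<dots> = (?M ** B - B ** ?M) ** ?P + ?M ** (?P ** B - B ** ?P)"
    by (simp add: DM Suc)
  also have "\<dots> = ?M ** ?P ** B - B ** (?M ** ?P)"
    by (simp add: matrix_diff_rdistrib matrix_diff_ldistrib matrix_mul_assoc)
  finally show ?case by simp
qed

lemma D_trace_matpow_commutator:
  assumes "C_mat M" "D_mat M = M x\<^sub>0 y\<^sub>0 ** B - B ** M x\<^sub>0 y\<^sub>0"
  shows "D (\<lambda>x y. trace (matpow (M x y) a)) = 0"
  using D_trace[OF C_mat_matpow[OF assms(1)]] D_mat_matpow_commutator[OF assms]
  by (simp add: trace_commutator)

end

context
  fixes U :: "(real^'n::finite) set"
  assumes open_U: "open U"
begin

lemma derivation_dderiv:
  assumes "x \<in> U" "y \<noteq> 0"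
  shows "derivation_at (\<lambda>f. dderiv u f x y) (smooth_T0 U) x y"
  by unfold_locales
     (auto simp: dderiv_add dderiv_mult dderiv_const smooth_T0_differentiable[OF _ assms]
        smooth_T0_add[OF open_U] smooth_T0_mult[OF open_U] smooth_T0_const[OF open_U])

lemma derivation_dx: "x \<in> U \<Longrightarrow> y \<noteq> 0 \<Longrightarrow> derivation_at (\<lambda>f. dx i f x y) (smooth_T0 U) x y"
  using derivation_dderiv[of x y "(axis i 1, 0)"] by (simp add: dx_eq_dderiv)

lemma derivation_dy: "x \<in> U \<Longrightarrow> y \<noteq> 0 \<Longrightarrow> derivation_at (\<lambda>f. dy i f x y) (smooth_T0 U) x y"
  using derivation_dderiv[of x y "(0, axis i 1)"] by (simp add: dy_eq_dderiv)

lemma derivation_spray: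
  assumes xy: "x \<in> U" "y \<noteq> 0"
  shows "derivation_at (\<lambda>f. spray F f x y) (smooth_T0 U) x y"
proof unfold_locales
  fix f g assume f: "smooth_T0 U f" and g: "smooth_T0 U g"
  interpret Dx: derivation_at "\<lambda>f. dx i f x y" "smooth_T0 U" x y for i by (rule derivation_dx[OF xy])
  interpret Dy: derivation_at "\<lambda>f. dy i f x y" "smooth_T0 U" x y for i by (rule derivation_dy[OF xy])
  show "spray F (\<lambda>x y. f x y + g x y) x y = spray F f x y + spray F g x y"
    unfolding spray_def Dx.D_add[OF f g] Dy.D_add[OF f g]
    by (simp add: sum.distrib distrib_left)
  show "spray F (\<lambda>x y. f x y * g x y) x y = f x y * spray F g x y + spray F f x y * g x y"
    unfolding spray_def Dx.D_mult[OF f g] Dy.D_mult[OF f g]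
    by (simp add: sum.distrib distrib_left sum_distrib_left sum_distrib_right right_diff_distrib
        left_diff_distrib mult.assoc mult.left_commute)
  show "smooth_T0 U (\<lambda>x y. f x y + g x y)" by (rule smooth_T0_add[OF open_U f g])
  show "smooth_T0 U (\<lambda>x y. f x y * g x y)" by (rule smooth_T0_mult[OF open_U f g])
next
  show "spray F (\<lambda>x y. c) x y = 0" for c by (simp add: spray_def dx_eq_dderiv dy_eq_dderiv dderiv_const)
  show "smooth_T0 U (\<lambda>x y. c)" for c by (rule smooth_T0_const[OF open_U])
qed

end

section \<open>Positive homogeneity in the fibre variable\<close>

definition homogeneous_T0 :: "(real^'n::finite) set \<Rightarrow> real \<Rightarrow> 'n tfun \<Rightarrow> bool" where
  "homogeneous_T0 U r f \<longleftrightarrow> (\<forall>x\<in>U. \<forall>y. y \<noteq> 0 \<longrightarrow> (\<forall>c>0. f x (c *\<^sub>R y) = c powr r * f x y))"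

context
  fixes U :: "(real^'n::finite) set"
  assumes open_U: "open U"
begin

lemma homogeneous_dderiv_x:
  assumes f: "smooth_T0 U f" and h: "homogeneous_T0 U r f" and xy: "x \<in> U" "y \<noteq> 0" and c: "c > 0"
  shows "dderiv (a, 0) f x (c *\<^sub>R y) = c powr r * dderiv (a, 0) f x y"
proof -
  have "\<forall>\<^sub>F t in nhds 0. x + t *\<^sub>R a \<in> U" by (rule eventually_line_in_open[OF open_U xy(1)])
  then have "\<forall>\<^sub>F t in nhds 0. uncurried f ((x, c *\<^sub>R y) + t *\<^sub>R (a, 0)) =
      c powr r * uncurried f ((x, y) + t *\<^sub>R (a, 0))"
    by eventually_elim (use h xy c in \<open>simp add: homogeneous_T0_def uncurried_def\<close>)
  from DERIV_cong_ev[OF refl this refl]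
  have "((\<lambda>t. uncurried f ((x, c *\<^sub>R y) + t *\<^sub>R (a, 0))) has_real_derivative
      c powr r * dderiv (a, 0) f x y) (at 0)"
    using DERIV_cmult[OF dderiv_has_real_derivative[OF smooth_T0_differentiable[OF f xy],
          of "(a, 0)"], of "c powr r"]
    by simp
  then show ?thesis unfolding dderiv_def by (rule DERIV_imp_deriv)
qed

lemma homogeneous_dderiv_y:
  assumes f: "smooth_T0 U f" and h: "homogeneous_T0 U r f" and xy: "x \<in> U" "y \<noteq> 0" and c: "c > 0"
  shows "dderiv (0, b) f x (c *\<^sub>R y) = c powr (r - 1) * dderiv (0, b) f x y"
proof -
  let ?\<phi> = "\<lambda>t. uncurried f ((x, y) + t *\<^sub>R (0, b))"
  have "((\<lambda>t. t / c) has_real_derivative 1 / c) (at 0)"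
    using c by (auto intro!: derivative_eq_intros)
  then have "((\<lambda>t. ?\<phi> (t / c)) has_real_derivative dderiv (0, b) f x y * (1 / c)) (at 0)"
    using DERIV_chain2[of ?\<phi> "dderiv (0, b) f x y" "\<lambda>t. t / c" 0 "1 / c"]
      dderiv_has_real_derivative[OF smooth_T0_differentiable[OF f xy], of "(0, b)"]
    by simp
  then have D: "((\<lambda>t. c powr r * ?\<phi> (t / c)) has_real_derivative
      c powr r * (dderiv (0, b) f x y * (1 / c))) (at 0)"
    by (rule DERIV_cmult)
  have "\<forall>\<^sub>F t in nhds 0. y + t *\<^sub>R ((1 / c) *\<^sub>R b) \<in> UNIV - {0}"
    by (rule eventually_line_in_open) (use xy in auto)
  then have "\<forall>\<^sub>F t in nhds 0. uncurried f ((x, c *\<^sub>R y) + t *\<^sub>R (0, b)) = c powr r * ?\<phi> (t / c)"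
  proof eventually_elim
    case (elim t)
    have "c *\<^sub>R y + t *\<^sub>R b = c *\<^sub>R (y + (t / c) *\<^sub>R b)" using c by (simp add: algebra_simps)
    then show ?case using h xy c elim by (simp add: homogeneous_T0_def uncurried_def)
  qed
  from DERIV_cong_ev[OF refl this refl] D
  have "dderiv (0, b) f x (c *\<^sub>R y) = c powr r * (dderiv (0, b) f x y * (1 / c))"
    unfolding dderiv_def by (simp add: DERIV_imp_deriv)
  also have "\<dots> = c powr (r - 1) * dderiv (0, b) f x y"
    using c by (simp add: powr_diff)
  finally show ?thesis .
qed

lemma homogeneous_dx:
  assumes "smooth_T0 U f" "homogeneous_T0 U r f"
  shows "homogeneous_T0 U r (dx i f)"
  unfolding homogeneous_T0_def dx_eq_dderiv using homogeneous_dderiv_x[OF assms] by blast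

lemma homogeneous_dy:
  assumes "smooth_T0 U f" "homogeneous_T0 U r f"
  shows "homogeneous_T0 U (r - 1) (dy i f)"
  unfolding homogeneous_T0_def dy_eq_dderiv using homogeneous_dderiv_y[OF assms] by blast

lemma euler_homogeneous:
  assumes f: "smooth_T0 U f" and h: "homogeneous_T0 U r f" and xy: "x \<in> U" "y \<noteq> 0"
  shows "(\<Sum>l\<in>UNIV. y $ l * dy l f x y) = r * f x y"
proof -
  have d: "tf_differentiable f x y" by (rule smooth_T0_differentiable[OF f xy])
  have A: "((\<lambda>t. uncurried f ((x, 0) + t *\<^sub>R (0, y))) has_real_derivative tf_deriv f x y (0, y)) (at 1)"
    by (rule has_derivative_imp_line_derivative) (simp add: tf_differentiable_has_derivative[OF d])
  have "\<forall>\<^sub>F t in nhds (1::real). t \<in> {0<..}"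
    by (rule eventually_nhds_in_open) simp_all
  then have ev: "\<forall>\<^sub>F t in nhds 1. uncurried f ((x, 0) + t *\<^sub>R (0, y)) = t powr r * f x y"
    by eventually_elim (use h xy in \<open>simp add: homogeneous_T0_def uncurried_def\<close>)
  have "((\<lambda>t. t powr r * f x y) has_real_derivative r * 1 powr (r - 1) * f x y) (at 1)"
    by (rule DERIV_cmult_right) (rule has_real_derivative_powr, simp)
  then have "tf_deriv f x y (0, y) = r * f x y"
    using DERIV_unique[OF A] DERIV_cong_ev[OF refl ev refl] by simp
  moreover have "tf_deriv f x y (0, y) = (\<Sum>l\<in>UNIV. y $ l * dy l f x y)"
  proof -
    have "linear (\<lambda>v::real^'n. ((0::real^'n), v))"
      by (intro bounded_linear.linear bounded_linear_Pair bounded_linear_zero bounded_linear_ident)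
    from linear_compose[OF this has_derivative_linear[OF tf_differentiable_has_derivative[OF d]]]
    have L: "linear (\<lambda>v. tf_deriv f x y (0, v))" by (simp add: o_def)
    have "y = (\<Sum>l\<in>UNIV. y $ l *\<^sub>R axis l 1)"
      using basis_expansion[of y] by (simp add: vec_eq_iff)
    then have "tf_deriv f x y (0, y) = tf_deriv f x y (0, \<Sum>l\<in>UNIV. y $ l *\<^sub>R axis l 1)" by simp
    also have "\<dots> = (\<Sum>l\<in>UNIV. y $ l * tf_deriv f x y (0, axis l 1))"
      unfolding linear_sum[OF L] by (simp add: linear_cmul[OF L])
    finally show ?thesis by (simp add: dy_eq_dderiv dderiv_eq_tf_deriv[OF d])
  qed
  ultimately show ?thesis by simp
qed

end

section \<open>The geodesic spray of a Finsler structure\<close>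

definition spray_mat ::
    "'n::finite tfun \<Rightarrow> (real^'n \<Rightarrow> real^'n \<Rightarrow> real^'n^'n) \<Rightarrow> real^'n \<Rightarrow> real^'n \<Rightarrow> real^'n^'n"
  where "spray_mat F A x y = (\<chi> i j. spray F (\<lambda>x y. A x y $ i $ j) x y)"

definition nonlinear_conn :: "'n::finite tfun \<Rightarrow> real^'n \<Rightarrow> real^'n \<Rightarrow> real^'n^'n" where
  "nonlinear_conn F x y = (\<chi> i j. dy j (sprayG F i) x y)"

definition spray_rhs :: "'n::finite tfun \<Rightarrow> 'n \<Rightarrow> 'n tfun" where
  "spray_rhs F j x y =
     (\<Sum>k\<in>UNIV. dx k (dy j (\<lambda>x y. (F x y)\<^sup>2)) x y * y $ k) - dx j (\<lambda>x y. (F x y)\<^sup>2) x y"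

lemma sprayG_eq_spray_rhs: "sprayG F i x y = (1/4) * (\<Sum>j\<in>UNIV. ginv F x y $ i $ j * spray_rhs F j x y)"
  by (simp add: sprayG_def spray_rhs_def)

lemma D_mat_spray:
  "derivation_at (\<lambda>f. spray F f x y) C x y \<Longrightarrow>
     derivation_at.D_mat (\<lambda>f. spray F f x y) A = spray_mat F A x y"
  by (simp add: derivation_at.D_mat_def spray_mat_def)

lemma dy_coord_y: "dy j (\<lambda>x y. y $ i) x y = (if i = j then 1 else 0)"
  by (simp add: dy_eq_dderiv dderiv_coord_y axis_def)

locale finsler_chart =
  fixes U :: "(real^'n::finite) set" and F :: "'n tfun"
  assumes finsler: "finsler U F"
begin

lemma open_U: "open U"
  using finsler by (simp add: finsler_def)

lemma smooth_F: "smooth_T0 U F"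
  using finsler by (simp add: finsler_def)

lemmas smooth_T0_intros =
  smooth_T0_add[OF open_U] smooth_T0_mult[OF open_U] smooth_T0_const[OF open_U]
  smooth_T0_coord_y[OF open_U] smooth_T0_cmult[OF open_U] smooth_T0_minus[OF open_U]
  smooth_T0_diff[OF open_U] smooth_T0_sum[OF open_U] smooth_T0_dx smooth_T0_dy

lemma smooth_F2: "smooth_T0 U (\<lambda>x y. (F x y)\<^sup>2)"
  unfolding power2_eq_square by (intro smooth_T0_intros smooth_F)

lemma smooth_gmat: "smooth_T0 U (\<lambda>x y. gmat F x y $ i $ j)"
proof -
  have "(\<lambda>x y. gmat F x y $ i $ j) = (\<lambda>x y. 1/2 * dy i (dy j (\<lambda>x y. (F x y)\<^sup>2)) x y)"
    by (simp add: gmat_def)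
  then show ?thesis by (simp only:) (intro smooth_T0_intros smooth_F2)
qed

lemma gmat_sym: "x \<in> U \<Longrightarrow> y \<noteq> 0 \<Longrightarrow> gmat F x y $ i $ j = gmat F x y $ j $ i"
  unfolding gmat_def using dy_dy_commute[OF open_U smooth_F2] by simp

lemma det_gmat_nonzero: "x \<in> U \<Longrightarrow> y \<noteq> 0 \<Longrightarrow> det (gmat F x y) \<noteq> 0"
  using finsler by (simp add: finsler_def gmat_def)

lemma gmat_ginv: "x \<in> U \<Longrightarrow> y \<noteq> 0 \<Longrightarrow> gmat F x y ** ginv F x y = mat 1"
  using invertible_matrix_inv(1)[of "gmat F x y"] det_gmat_nonzero
  by (simp add: ginv_def invertible_det_nz)

lemma ginv_gmat: "x \<in> U \<Longrightarrow> y \<noteq> 0 \<Longrightarrow> ginv F x y ** gmat F x y = mat 1"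
  using invertible_matrix_inv(2)[of "gmat F x y"] det_gmat_nonzero
  by (simp add: ginv_def invertible_det_nz)

lemma smooth_det_gmat: "smooth_T0 U (\<lambda>x y. det (gmat F x y))"
  by (rule smooth_T0_det[OF open_U smooth_gmat])

lemma smooth_ginv: "smooth_T0 U (\<lambda>x y. ginv F x y $ i $ j)"
proof (rule smooth_T0_cong[OF open_U])
  have "smooth_T0 U (\<lambda>x y. det (row_replace (gmat F x y) j (axis i 1)))"
  proof (rule smooth_T0_det[OF open_U])
    show "smooth_T0 U (\<lambda>x y. row_replace (gmat F x y) j (axis i 1) $ r $ c)" for r c
      by (cases "r = j") (simp_all add: row_replace_def smooth_gmat smooth_T0_const[OF open_U])
  qed
  then show "smooth_T0 U (\<lambda>x y. cofactor (gmat F x y) j i / det (gmat F x y))"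
    unfolding cofactor_def
    by (rule smooth_T0_divide[OF open_U _ smooth_det_gmat]) (use det_gmat_nonzero in blast)
  show "eq_on_T0 U (\<lambda>x y. cofactor (gmat F x y) j i / det (gmat F x y)) (\<lambda>x y. ginv F x y $ i $ j)"
    unfolding eq_on_T0_def ginv_def using matrix_inv_cofactor[OF det_gmat_nonzero] by simp
qed

lemma smooth_spray_rhs: "smooth_T0 U (spray_rhs F j)"
  unfolding spray_rhs_def[abs_def] by (intro smooth_T0_intros smooth_F2) simp

lemma smooth_sprayG: "smooth_T0 U (sprayG F i)"
  unfolding sprayG_eq_spray_rhs[abs_def] by (intro smooth_T0_intros smooth_ginv smooth_spray_rhs) simp

lemma smooth_nonlinear_conn: "smooth_T0 U (\<lambda>x y. nonlinear_conn F x y $ i $ j)"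
  unfolding nonlinear_conn_def by (simp add: smooth_T0_dy smooth_sprayG)

lemma smooth_spray: "smooth_T0 U f \<Longrightarrow> smooth_T0 U (spray F f)"
  unfolding spray_def[abs_def] by (intro smooth_T0_intros smooth_sprayG) simp_all

lemma spray_cong: "x \<in> U \<Longrightarrow> y \<noteq> 0 \<Longrightarrow> eq_on_T0 U f g \<Longrightarrow> spray F f x y = spray F g x y"
  unfolding spray_def dx_eq_dderiv dy_eq_dderiv using dderiv_cong[OF open_U] by simp

lemma homogeneous_F: "homogeneous_T0 U 1 F"
  using finsler by (simp add: finsler_def homogeneous_T0_def)

lemma homogeneous_F2: "homogeneous_T0 U 2 (\<lambda>x y. (F x y)\<^sup>2)"
  using finsler by (simp add: finsler_def homogeneous_T0_def power_mult_distrib)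

lemma euler_dy_F2:
  "x \<in> U \<Longrightarrow> y \<noteq> 0 \<Longrightarrow>
     (\<Sum>l\<in>UNIV. y $ l * dy l (dy k (\<lambda>x y. (F x y)\<^sup>2)) x y) = dy k (\<lambda>x y. (F x y)\<^sup>2) x y"
  using euler_homogeneous[OF open_U smooth_T0_dy[OF smooth_F2]
      homogeneous_dy[OF open_U smooth_F2 homogeneous_F2]]
  by simp

lemma euler_dx_F2:
  "x \<in> U \<Longrightarrow> y \<noteq> 0 \<Longrightarrow>
     (\<Sum>l\<in>UNIV. y $ l * dy l (dx m (\<lambda>x y. (F x y)\<^sup>2)) x y) = 2 * dx m (\<lambda>x y. (F x y)\<^sup>2) x y"
  using euler_homogeneous[OF open_U smooth_T0_dx[OF smooth_F2]
      homogeneous_dx[OF open_U smooth_F2 homogeneous_F2]]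
  by simp

text \<open>This is the linear system that the spray coefficients are defined to solve.\<close>

lemma dy_dy_F2_sprayG:
  assumes xy: "x \<in> U" "y \<noteq> 0"
  shows "(\<Sum>l\<in>UNIV. dy k (dy l (\<lambda>x y. (F x y)\<^sup>2)) x y * sprayG F l x y) = spray_rhs F k x y / 2"
proof -
  let ?g = "gmat F x y" and ?gi = "ginv F x y"
  have g: "dy k (dy l (\<lambda>x y. (F x y)\<^sup>2)) x y = 2 * ?g $ k $ l" for l by (simp add: gmat_def)
  have "(\<Sum>l\<in>UNIV. dy k (dy l (\<lambda>x y. (F x y)\<^sup>2)) x y * sprayG F l x y) =
      (\<Sum>j\<in>UNIV. \<Sum>l\<in>UNIV. 1/2 * (?g $ k $ l * ?gi $ l $ j * spray_rhs F j x y))"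
    by (simp add: g sprayG_eq_spray_rhs sum_distrib_left mult_ac) (rule sum.swap)
  also have "\<dots> = (\<Sum>j\<in>UNIV. 1/2 * ((?g ** ?gi) $ k $ j * spray_rhs F j x y))"
    by (simp add: matrix_matrix_mult_def sum_distrib_left sum_distrib_right)
  also have "\<dots> = (\<Sum>j\<in>UNIV. if k = j then spray_rhs F j x y / 2 else 0)"
    by (rule sum.cong) (auto simp: gmat_ginv[OF xy] mat_def)
  also have "\<dots> = spray_rhs F k x y / 2" by simp
  finally show ?thesis .
qed

lemma spray_F2:
  assumes xy: "x \<in> U" "y \<noteq> 0"
  shows "spray F (\<lambda>x y. (F x y)\<^sup>2) x y = 0"
proof -
  let ?h = "\<lambda>x y. (F x y)\<^sup>2"
  have "(\<Sum>l\<in>UNIV. sprayG F l x y * dy l ?h x y) =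
      (\<Sum>l\<in>UNIV. \<Sum>k\<in>UNIV. y $ k * (dy k (dy l ?h) x y * sprayG F l x y))"
    by (simp add: euler_dy_F2[OF xy, symmetric] sum_distrib_left sum_distrib_right mult_ac)
  also have "\<dots> = (\<Sum>k\<in>UNIV. y $ k * (\<Sum>l\<in>UNIV. dy k (dy l ?h) x y * sprayG F l x y))"
    by (subst sum.swap) (simp add: sum_distrib_left)
  also have "\<dots> = (\<Sum>k\<in>UNIV. y $ k * spray_rhs F k x y) / 2"
    by (simp add: dy_dy_F2_sprayG[OF xy] sum_divide_distrib)
  finally have A: "(\<Sum>l\<in>UNIV. sprayG F l x y * dy l ?h x y) = (\<Sum>k\<in>UNIV. y $ k * spray_rhs F k x y) / 2" .
  have xdy: "(\<Sum>k\<in>UNIV. y $ k * dx m (dy k ?h) x y) = 2 * dx m ?h x y" for m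
    using euler_dx_F2[OF xy, of m] dx_dy_commute[OF open_U smooth_F2 xy] by simp
  have "(\<Sum>k\<in>UNIV. y $ k * spray_rhs F k x y) =
      (\<Sum>k\<in>UNIV. \<Sum>m\<in>UNIV. y $ m * (y $ k * dx m (dy k ?h) x y)) - (\<Sum>k\<in>UNIV. y $ k * dx k ?h x y)"
    by (simp add: spray_rhs_def right_diff_distrib sum_subtractf sum_distrib_left mult_ac)
  also have "\<dots> =
      (\<Sum>m\<in>UNIV. y $ m * (\<Sum>k\<in>UNIV. y $ k * dx m (dy k ?h) x y)) - (\<Sum>k\<in>UNIV. y $ k * dx k ?h x y)"
    by (subst sum.swap) (simp add: sum_distrib_left)
  also have "\<dots> = (\<Sum>m\<in>UNIV. y $ m * dx m ?h x y)"
    by (simp add: xdy sum_distrib_left mult_ac flip: sum.distrib)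
  finally show ?thesis unfolding spray_def A by simp
qed

lemma spray_dy_F2:
  assumes xy: "x \<in> U" "y \<noteq> 0"
  shows "spray F (dy k (\<lambda>x y. (F x y)\<^sup>2)) x y = dx k (\<lambda>x y. (F x y)\<^sup>2) x y"
proof -
  have "(\<Sum>l\<in>UNIV. sprayG F l x y * dy l (dy k (\<lambda>x y. (F x y)\<^sup>2)) x y) =
      (\<Sum>l\<in>UNIV. dy k (dy l (\<lambda>x y. (F x y)\<^sup>2)) x y * sprayG F l x y)"
    using dy_dy_commute[OF open_U smooth_F2 xy] by (simp add: mult.commute)
  then have "(\<Sum>l\<in>UNIV. sprayG F l x y * dy l (dy k (\<lambda>x y. (F x y)\<^sup>2)) x y) = spray_rhs F k x y / 2"
    using dy_dy_F2_sprayG[OF xy] by simp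
  then show ?thesis unfolding spray_def by (simp add: spray_rhs_def mult.commute)
qed

lemma dy_spray:
  assumes xy: "x \<in> U" "y \<noteq> 0" and u: "smooth_T0 U u"
  shows "dy j (spray F u) x y =
    spray F (dy j u) x y + dx j u x y - 2 * (\<Sum>l\<in>UNIV. dy j (sprayG F l) x y * dy l u x y)"
proof -
  interpret Dy: derivation_at "\<lambda>f. dy j f x y" "smooth_T0 U" x y by (rule derivation_dy[OF open_U xy])
  have A: "dy j (\<lambda>x y. \<Sum>i\<in>UNIV. y $ i * dx i u x y) x y =
      (\<Sum>i\<in>UNIV. y $ i * dx i (dy j u) x y) + dx j u x y"
  proof -
    have "dy j (\<lambda>x y. \<Sum>i\<in>UNIV. y $ i * dx i u x y) x y =
        (\<Sum>i\<in>UNIV. y $ i * dx i (dy j u) x y + (if i = j then dx i u x y else 0))"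
      by (subst Dy.D_sum, simp_all add: smooth_T0_intros u, rule sum.cong[OF refl], subst Dy.D_mult)
         (auto intro!: smooth_T0_intros u simp: dy_coord_y dx_dy_commute[OF open_U u xy])
    then show ?thesis by (simp add: sum.distrib)
  qed
  have B: "dy j (\<lambda>x y. \<Sum>i\<in>UNIV. sprayG F i x y * dy i u x y) x y =
      (\<Sum>i\<in>UNIV. sprayG F i x y * dy i (dy j u) x y) + (\<Sum>i\<in>UNIV. dy j (sprayG F i) x y * dy i u x y)"
  proof -
    have "dy j (\<lambda>x y. \<Sum>i\<in>UNIV. sprayG F i x y * dy i u x y) x y =
        (\<Sum>i\<in>UNIV. sprayG F i x y * dy i (dy j u) x y + dy j (sprayG F i) x y * dy i u x y)"
      by (subst Dy.D_sum, simp_all add: smooth_T0_intros u smooth_sprayG, rule sum.cong[OF refl],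
          subst Dy.D_mult)
         (auto intro!: smooth_T0_intros u smooth_sprayG simp: dy_dy_commute[OF open_U u xy])
    then show ?thesis by (simp add: sum.distrib)
  qed
  have SA: "smooth_T0 U (\<lambda>x y. \<Sum>i\<in>UNIV. y $ i * dx i u x y)"
    by (intro smooth_T0_intros u) simp
  have SB: "smooth_T0 U (\<lambda>x y. \<Sum>i\<in>UNIV. sprayG F i x y * dy i u x y)"
    by (intro smooth_T0_intros u smooth_sprayG) simp
  have "spray F u = (\<lambda>x y. (\<Sum>i\<in>UNIV. y $ i * dx i u x y) - 2 * (\<Sum>i\<in>UNIV. sprayG F i x y * dy i u x y))"
    by (simp add: spray_def fun_eq_iff)
  then have "dy j (spray F u) x y = dy j (\<lambda>x y. \<Sum>i\<in>UNIV. y $ i * dx i u x y) x y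
      - 2 * dy j (\<lambda>x y. \<Sum>i\<in>UNIV. sprayG F i x y * dy i u x y) x y"
    by (simp only:, subst Dy.D_diff) (auto intro!: SA SB smooth_T0_intros simp: Dy.D_cmult[OF SB])
  then show ?thesis unfolding A B by (simp add: spray_def algebra_simps)
qed

text \<open>Add the \<open>y\<^sup>j\<close>-derivative of the hypothesis for \<open>i\<close> to the \<open>y\<^sup>i\<close>-derivative of the one for \<open>j\<close>:
  the mixed \<open>x\<close>-\<open>y\<close> derivatives cancel by symmetry of second derivatives.\<close>

lemma spray_dy_dy:
  assumes xy: "x \<in> U" "y \<noteq> 0" and u: "smooth_T0 U u"
    and hyp: "\<And>i. eq_on_T0 U (spray F (dy i u)) (dx i u)"
  shows "spray F (dy j (dy i u)) x y = (\<Sum>l\<in>UNIV. dy j (sprayG F l) x y * dy l (dy i u) x y)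
           + (\<Sum>l\<in>UNIV. dy i (sprayG F l) x y * dy l (dy j u) x y)"
proof -
  have "dy j (spray F (dy i u)) x y = dy j (dx i u) x y"
    and "dy i (spray F (dy j u)) x y = dy i (dx j u) x y"
    using dderiv_cong[OF open_U hyp xy] by (simp_all add: dy_eq_dderiv)
  moreover have "spray F (dy i (dy j u)) x y = spray F (dy j (dy i u)) x y"
    by (rule spray_cong[OF xy]) (use dy_dy_commute[OF open_U u] in \<open>auto simp: eq_on_T0_def\<close>)
  ultimately show ?thesis
    using dy_spray[OF xy smooth_T0_dy[OF u], of j i] dy_spray[OF xy smooth_T0_dy[OF u], of i j]
      dx_dy_commute[OF open_U u xy, of i j] dx_dy_commute[OF open_U u xy, of j i]
    by linarith
qed

lemma spray_gmat:
  assumes xy: "x \<in> U" "y \<noteq> 0"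
  shows "spray_mat F (gmat F) x y =
    transpose (nonlinear_conn F x y) ** gmat F x y + gmat F x y ** nonlinear_conn F x y"
proof -
  interpret SP: derivation_at "\<lambda>f. spray F f x y" "smooth_T0 U" x y
    by (rule derivation_spray[OF open_U xy])
  let ?h = "\<lambda>x y. (F x y)\<^sup>2"
  have hyp: "eq_on_T0 U (spray F (dy i ?h)) (dx i ?h)" for i
    using spray_dy_F2 by (simp add: eq_on_T0_def)
  have "spray F (\<lambda>x y. gmat F x y $ k $ j) x y =
      (\<Sum>l\<in>UNIV. dy k (sprayG F l) x y * gmat F x y $ l $ j) +
      (\<Sum>l\<in>UNIV. gmat F x y $ k $ l * dy j (sprayG F l) x y)" for k j
  proof -
    have a: "dy l (dy j ?h) x y = 2 * gmat F x y $ l $ j" for l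
      by (simp add: gmat_def)
    have b: "dy l (dy k ?h) x y = 2 * gmat F x y $ k $ l" for l
      using gmat_sym[OF xy, of l k] by (simp add: gmat_def)
    have "(\<lambda>x y. gmat F x y $ k $ j) = (\<lambda>x y. 1/2 * dy k (dy j ?h) x y)"
      by (simp add: gmat_def)
    then have "spray F (\<lambda>x y. gmat F x y $ k $ j) x y = 1/2 * spray F (dy k (dy j ?h)) x y"
      by (simp only:) (rule SP.D_cmult, intro smooth_T0_intros smooth_F2)
    then show ?thesis
      by (simp add: spray_dy_dy[OF xy smooth_F2 hyp] a b sum_distrib_left distrib_left mult_ac)
  qed
  then show ?thesis
    by (simp add: spray_mat_def vec_eq_iff matrix_matrix_mult_def nonlinear_conn_def transpose_def)
qed

lemma spray_det_gmat:
  assumes xy: "x \<in> U" "y \<noteq> 0"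
  shows "spray F (\<lambda>x y. det (gmat F x y)) x y = 2 * trace (nonlinear_conn F x y) * det (gmat F x y)"
proof -
  interpret SP: derivation_at "\<lambda>f. spray F f x y" "smooth_T0 U" x y
    by (rule derivation_spray[OF open_U xy])
  have "SP.C_mat (gmat F)" by (simp add: SP.C_mat_def smooth_gmat)
  then show ?thesis
    using SP.D_det
      jacobi_contraction[of "transpose (nonlinear_conn F x y)" "gmat F x y" "nonlinear_conn F x y"]
    by (simp add: D_mat_spray[OF SP.derivation_at_axioms] spray_gmat[OF xy] trace_transpose)
qed

lemma F_nonzero:
  assumes xy: "x \<in> U" "y \<noteq> 0"
  shows "F x y \<noteq> 0"
proof
  assume F0: "F x y = 0"
  interpret Dy: derivation_at "\<lambda>f. dy i f x y" "smooth_T0 U" x y for i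
    by (rule derivation_dy[OF open_U xy])
  have "dy i (\<lambda>x y. F x y * F x y) x y = 0" for i
    by (subst Dy.D_mult) (simp_all add: smooth_F F0)
  then have euler_0: "(\<Sum>l\<in>UNIV. y $ l * dy l (dy i (\<lambda>x y. (F x y)\<^sup>2)) x y) = 0" for i
    using euler_dy_F2[OF xy, of i] by (simp add: power2_eq_square)
  have "(gmat F x y *v y) $ i = 0" for i
  proof -
    have "(gmat F x y *v y) $ i = (\<Sum>l\<in>UNIV. gmat F x y $ l $ i * y $ l)"
      using gmat_sym[OF xy] by (simp add: matrix_vector_mult_def)
    also have "\<dots> = 1/2 * (\<Sum>l\<in>UNIV. y $ l * dy l (dy i (\<lambda>x y. (F x y)\<^sup>2)) x y)"
      by (simp add: gmat_def sum_distrib_left mult_ac)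
    finally show ?thesis using euler_0[of i] by simp
  qed
  then have "gmat F x y *v y = gmat F x y *v 0" by (simp add: vec_eq_iff)
  moreover have "invertible (gmat F x y)"
    using det_gmat_nonzero[OF xy] by (simp add: invertible_det_nz)
  ultimately have "y = 0" using injD[OF inj_matrix_vector_mult] by blast
  with xy show False by simp
qed

lemma spray_F:
  assumes xy: "x \<in> U" "y \<noteq> 0"
  shows "spray F F x y = 0"
proof -
  interpret SP: derivation_at "\<lambda>f. spray F f x y" "smooth_T0 U" x y
    by (rule derivation_spray[OF open_U xy])
  have "2 * F x y * spray F F x y = spray F (\<lambda>x y. F x y * F x y) x y"
    by (subst SP.D_mult) (simp_all add: smooth_F)
  also have "\<dots> = 0" using spray_F2[OF xy] by (simp add: power2_eq_square)
  finally show ?thesis using F_nonzero[OF xy] by simp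
qed

end

section \<open>The S-curvature and the mean Berwald curvature\<close>

lemma dy_x_only: "dy j (\<lambda>x y. \<phi> x) x y = 0"
  by (simp add: dy_def)

lemma dy_dx_x_only: "dy j (dx m (\<lambda>x y. \<phi> x)) x y = 0"
  by (simp add: dy_def dx_def)

locale finsler_volume = finsler_chart U F for U :: "(real^'n::finite) set" and F +
  fixes \<sigma> :: "real^'n \<Rightarrow> real"
  assumes sigma_pos: "\<forall>x\<in>U. \<sigma> x > 0"
    and sigma_smooth: "smooth_T0 U (\<lambda>x y. \<sigma> x)"
begin

text \<open>Writing \<open>ln |det g|\<close> as \<open>ln (det g \<cdot> det g) / 2\<close> makes the smoothness of the
  distortion visible.\<close>

definition tau :: "'n tfun" where
  "tau x y = 1/4 * ln (det (gmat F x y) * det (gmat F x y)) - 1/2 * ln (\<sigma> x)"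

definition S_formula :: "'n tfun" where
  "S_formula x y = trace (nonlinear_conn F x y)
     - 1/2 * ((\<Sum>m\<in>UNIV. y $ m * dx m (\<lambda>x y. \<sigma> x) x y) * inverse (\<sigma> x))"

lemma smooth_inverse_sigma: "smooth_T0 U (\<lambda>x y. inverse (\<sigma> x))"
  by (rule smooth_T0_inverse[OF open_U sigma_smooth]) (use sigma_pos in auto)

lemma det_gmat_square_pos: "x \<in> U \<Longrightarrow> y \<noteq> 0 \<Longrightarrow> det (gmat F x y) * det (gmat F x y) > 0"
  using det_gmat_nonzero by (simp add: zero_less_mult_iff) (metis linorder_neqE_linordered_idom)

lemma distortion_eq_tau: "eq_on_T0 U (distortion \<sigma> F) tau"
  unfolding eq_on_T0_def
proof (intro allI impI)
  fix x y assume xy: "x \<in> U" "y \<noteq> (0::real^'n)"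
  let ?d = "det (gmat F x y)"
  have "?d \<noteq> 0" "\<sigma> x > 0" using det_gmat_nonzero[OF xy] sigma_pos xy by auto
  moreover have "ln \<bar>?d\<bar> = ln ?d" by (simp add: abs_if ln_minus)
  ultimately show "distortion \<sigma> F x y = tau x y"
    by (simp add: distortion_def tau_def ln_div ln_mult)
qed

lemma smooth_tau: "smooth_T0 U tau"
  unfolding tau_def[abs_def]
  by (intro smooth_T0_intros smooth_T0_ln[OF open_U] smooth_det_gmat sigma_smooth)
     (use det_gmat_square_pos sigma_pos in auto)

lemma smooth_Sfun: "smooth_T0 U (Sfun \<sigma> F)"
proof (rule smooth_T0_cong[OF open_U smooth_spray[OF smooth_tau]])
  show "eq_on_T0 U (spray F tau) (Sfun \<sigma> F)"
    unfolding eq_on_T0_def Sfun_def using spray_cong[OF _ _ distortion_eq_tau] by auto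
qed

lemma spray_ln:
  assumes xy: "x \<in> U" "y \<noteq> 0" and f: "smooth_T0 U f" and pos: "f x y > 0"
  shows "spray F (\<lambda>x y. ln (f x y)) x y = spray F f x y * inverse (f x y)"
  unfolding spray_def dx_eq_dderiv dy_eq_dderiv dderiv_ln[OF smooth_T0_differentiable[OF f xy] pos]
  by (simp add: sum_distrib_left sum_distrib_right right_diff_distrib left_diff_distrib mult_ac)

lemma spray_tau:
  assumes xy: "x \<in> U" "y \<noteq> 0"
  shows "spray F tau x y = S_formula x y"
proof -
  interpret SP: derivation_at "\<lambda>f. spray F f x y" "smooth_T0 U" x y
    by (rule derivation_spray[OF open_U xy])
  let ?dd = "\<lambda>x y. det (gmat F x y) * det (gmat F x y)"
  have dd: "smooth_T0 U ?dd" by (intro smooth_T0_intros smooth_det_gmat)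
  have ln_dd: "smooth_T0 U (\<lambda>x y. ln (?dd x y))"
    by (rule smooth_T0_ln[OF open_U dd]) (use det_gmat_square_pos in auto)
  have ln_\<sigma>: "smooth_T0 U (\<lambda>x y. ln (\<sigma> x))"
    by (rule smooth_T0_ln[OF open_U sigma_smooth]) (use sigma_pos in auto)
  have "spray F ?dd x y = 4 * trace (nonlinear_conn F x y) * ?dd x y"
    by (subst SP.D_mult) (simp_all add: smooth_det_gmat spray_det_gmat[OF xy])
  then have "spray F (\<lambda>x y. ln (?dd x y)) x y = 4 * trace (nonlinear_conn F x y)"
    using spray_ln[OF xy dd det_gmat_square_pos[OF xy]] det_gmat_nonzero[OF xy]
        by (simp add: field_simps)
  moreover have "spray F (\<lambda>x y. ln (\<sigma> x)) x y =
      (\<Sum>m\<in>UNIV. y $ m * dx m (\<lambda>x y. \<sigma> x) x y) * inverse (\<sigma> x)"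
    using spray_ln[OF xy sigma_smooth] sigma_pos xy by (simp add: spray_def dy_x_only)
  moreover have "spray F tau x y =
      1/4 * spray F (\<lambda>x y. ln (?dd x y)) x y - 1/2 * spray F (\<lambda>x y. ln (\<sigma> x)) x y"
    unfolding tau_def[abs_def]
    using SP.D_diff[OF smooth_T0_cmult[OF open_U ln_dd, of "1/4"]
        smooth_T0_cmult[OF open_U ln_\<sigma>, of "1/2"]]
      SP.D_cmult[OF ln_dd, of "1/4"] SP.D_cmult[OF ln_\<sigma>, of "1/2"]
    by linarith
  ultimately show ?thesis by (simp add: S_formula_def)
qed

lemma Sfun_eq_S_formula: "eq_on_T0 U (Sfun \<sigma> F) S_formula"
  using spray_cong[OF _ _ distortion_eq_tau] spray_tau by (simp add: eq_on_T0_def Sfun_def)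

lemma dy_S_formula:
  assumes xy: "x \<in> U" "y \<noteq> 0"
  shows "dy j S_formula x y =
    (\<Sum>m\<in>UNIV. dy j (dy m (sprayG F m)) x y) - 1/2 * (dx j (\<lambda>x y. \<sigma> x) x y * inverse (\<sigma> x))"
proof -
  interpret Dy: derivation_at "\<lambda>f. dy j f x y" "smooth_T0 U" x y by (rule derivation_dy[OF open_U xy])
  have d\<sigma>: "smooth_T0 U (dx m (\<lambda>x y. \<sigma> x))" for m by (rule smooth_T0_dx[OF sigma_smooth])
  have sum: "smooth_T0 U (\<lambda>x y. \<Sum>m\<in>UNIV. y $ m * dx m (\<lambda>x y. \<sigma> x) x y)"
    by (intro smooth_T0_intros d\<sigma>) simp
  have "dy j (\<lambda>x y. \<Sum>m\<in>UNIV. y $ m * dx m (\<lambda>x y. \<sigma> x) x y) x y =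
      (\<Sum>m\<in>UNIV. dy j (\<lambda>x y. y $ m * dx m (\<lambda>x y. \<sigma> x) x y) x y)"
    by (rule Dy.D_sum) (auto intro!: smooth_T0_intros d\<sigma>)
  also have "\<dots> = (\<Sum>m\<in>UNIV. if m = j then dx m (\<lambda>x y. \<sigma> x) x y else 0)"
    by (rule sum.cong[OF refl], subst Dy.D_mult)
       (auto intro!: smooth_T0_intros d\<sigma> simp: dy_coord_y dy_dx_x_only)
  finally have "dy j (\<lambda>x y. (\<Sum>m\<in>UNIV. y $ m * dx m (\<lambda>x y. \<sigma> x) x y) * inverse (\<sigma> x)) x y =
      dx j (\<lambda>x y. \<sigma> x) x y * inverse (\<sigma> x)"
    by (simp add: Dy.D_mult[OF sum smooth_inverse_sigma] dy_x_only)
  moreover have "dy j (\<lambda>x y. trace (nonlinear_conn F x y)) x y = (\<Sum>m\<in>UNIV. dy j (dy m (sprayG F m)) x y)"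
    unfolding trace_def nonlinear_conn_def by (simp add: Dy.D_sum smooth_T0_dy smooth_sprayG)
  moreover have tr: "smooth_T0 U (\<lambda>x y. trace (nonlinear_conn F x y))"
    unfolding trace_def by (intro smooth_T0_intros smooth_nonlinear_conn) simp
  ultimately show ?thesis
    unfolding S_formula_def[abs_def]
    using Dy.D_diff[OF tr
        smooth_T0_cmult[OF open_U smooth_T0_mult[OF open_U sum smooth_inverse_sigma], of "1/2"]]
      Dy.D_cmult[OF smooth_T0_mult[OF open_U sum smooth_inverse_sigma], of "1/2"]
    by linarith
qed

lemma meanE_eq_dy_dy_Sfun:
  assumes xy: "x \<in> U" "y \<noteq> 0"
  shows "meanE F k j x y = 1/2 * dy k (dy j (Sfun \<sigma> F)) x y"
proof -
  interpret Dk: derivation_at "\<lambda>f. dy k f x y" "smooth_T0 U" x y by (rule derivation_dy[OF open_U xy])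
  have "eq_on_T0 U (dy j (Sfun \<sigma> F))
      (\<lambda>x y. (\<Sum>m\<in>UNIV. dy j (dy m (sprayG F m)) x y) - 1/2 * (dx j (\<lambda>x y. \<sigma> x) x y * inverse (\<sigma> x)))"
    using dderiv_cong[OF open_U Sfun_eq_S_formula] dy_S_formula by (simp add: eq_on_T0_def dy_eq_dderiv)
  then have "dy k (dy j (Sfun \<sigma> F)) x y =
      dy k (\<lambda>x y. (\<Sum>m\<in>UNIV. dy j (dy m (sprayG F m)) x y)
        - 1/2 * (dx j (\<lambda>x y. \<sigma> x) x y * inverse (\<sigma> x))) x y"
    using dderiv_cong[OF open_U _ xy] by (simp add: dy_eq_dderiv)
  also have "\<dots> = (\<Sum>m\<in>UNIV. dy k (dy j (dy m (sprayG F m))) x y)"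
  proof -
    have d\<sigma>: "smooth_T0 U (\<lambda>x y. dx j (\<lambda>x y. \<sigma> x) x y * inverse (\<sigma> x))"
      by (intro smooth_T0_mult[OF open_U] smooth_T0_dx[OF sigma_smooth] smooth_inverse_sigma)
    have "dy k (\<lambda>x y. dx j (\<lambda>x y. \<sigma> x) x y * inverse (\<sigma> x)) x y = 0"
      by (simp add: Dk.D_mult[OF smooth_T0_dx[OF sigma_smooth] smooth_inverse_sigma]
          dy_dx_x_only dy_x_only)
    moreover have B: "smooth_T0 U (\<lambda>x y. \<Sum>m\<in>UNIV. dy j (dy m (sprayG F m)) x y)"
      by (intro smooth_T0_intros smooth_sprayG) simp
    moreover have "dy k (\<lambda>x y. \<Sum>m\<in>UNIV. dy j (dy m (sprayG F m)) x y) x y =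
        (\<Sum>m\<in>UNIV. dy k (dy j (dy m (sprayG F m))) x y)"
      by (simp add: Dk.D_sum smooth_T0_dy smooth_sprayG)
    ultimately show ?thesis
      using Dk.D_diff[OF B smooth_T0_cmult[OF open_U d\<sigma>, of "1/2"]] Dk.D_cmult[OF d\<sigma>, of "1/2"]
      by linarith
  qed
  finally show ?thesis by (simp add: meanE_def berwald_def)
qed

lemma smooth_meanE: "smooth_T0 U (meanE F k j)"
proof (rule smooth_T0_cong[OF open_U])
  show "smooth_T0 U (\<lambda>x y. 1/2 * dy k (dy j (Sfun \<sigma> F)) x y)"
    by (intro smooth_T0_intros smooth_Sfun)
  show "eq_on_T0 U (\<lambda>x y. 1/2 * dy k (dy j (Sfun \<sigma> F)) x y) (meanE F k j)"
    using meanE_eq_dy_dy_Sfun by (simp add: eq_on_T0_def)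
qed

lemma meanE_sym: "x \<in> U \<Longrightarrow> y \<noteq> 0 \<Longrightarrow> meanE F k j x y = meanE F j k x y"
  using meanE_eq_dy_dy_Sfun[of x y k j] meanE_eq_dy_dy_Sfun[of x y j k]
    dy_dy_commute[OF open_U smooth_Sfun, of x y k j]
  by simp

end

context finsler_chart
begin

lemma spray_ginv:
  assumes xy: "x \<in> U" "y \<noteq> 0"
  shows "spray_mat F (ginv F) x y =
    - (ginv F x y ** transpose (nonlinear_conn F x y) + nonlinear_conn F x y ** ginv F x y)"
proof -
  interpret SP: derivation_at "\<lambda>f. spray F f x y" "smooth_T0 U" x y
    by (rule derivation_spray[OF open_U xy])
  let ?g = "gmat F x y" and ?gi = "ginv F x y" and ?N = "nonlinear_conn F x y"
  have Cg: "SP.C_mat (gmat F)" and Cgi: "SP.C_mat (ginv F)"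
    by (simp_all add: SP.C_mat_def smooth_gmat smooth_ginv)
  have Dg: "SP.D_mat (gmat F) = transpose ?N ** ?g + ?g ** ?N"
    using spray_gmat[OF xy] by (simp add: D_mat_spray[OF SP.derivation_at_axioms])
  have "SP.D_mat (\<lambda>x y. ginv F x y ** gmat F x y) = SP.D_mat (\<lambda>x y. mat 1)"
    unfolding SP.D_mat_def by (simp add: vec_eq_iff spray_cong[OF xy] eq_on_T0_def ginv_gmat)
  also have "\<dots> = 0" by (simp add: SP.D_mat_def mat_def SP.D_const vec_eq_iff)
  finally have "SP.D_mat (ginv F) ** ?g = - (?gi ** SP.D_mat (gmat F))"
    using SP.D_mat_mult[OF Cgi Cg] by (simp add: eq_neg_iff_add_eq_0)
  then have "SP.D_mat (ginv F) = - (?gi ** SP.D_mat (gmat F)) ** ?gi"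
    by (metis gmat_ginv[OF xy] matrix_mul_assoc matrix_mul_rid)
  also have "\<dots> = - (?gi ** transpose ?N + ?N ** ?gi)"
  proof -
    have "(?gi ** (transpose ?N ** ?g)) ** ?gi = ?gi ** transpose ?N"
      by (metis matrix_mul_assoc gmat_ginv[OF xy] matrix_mul_rid)
    moreover have "(?gi ** (?g ** ?N)) ** ?gi = ?N ** ?gi"
      by (metis matrix_mul_assoc ginv_gmat[OF xy] matrix_mul_lid)
    ultimately show ?thesis
      unfolding Dg matrix_neg_lmult matrix_add_ldistrib matrix_add_rdistrib by simp
  qed
  finally show ?thesis by (simp add: D_mat_spray[OF SP.derivation_at_axioms])
qed

lemma gmat_scale:
  assumes xy: "x \<in> U" "y \<noteq> 0" and c: "c > 0"
  shows "gmat F x (c *\<^sub>R y) = gmat F x y"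
proof -
  have "homogeneous_T0 U (2 - 1 - 1) (dy i (dy j (\<lambda>x y. (F x y)\<^sup>2)))" for i j
    by (rule homogeneous_dy[OF open_U smooth_T0_dy[OF smooth_F2]
          homogeneous_dy[OF open_U smooth_F2 homogeneous_F2]])
  then show ?thesis
    using xy c unfolding homogeneous_T0_def by (simp add: gmat_def vec_eq_iff)
qed

lemma ginv_scale: "x \<in> U \<Longrightarrow> y \<noteq> 0 \<Longrightarrow> c > 0 \<Longrightarrow> ginv F x (c *\<^sub>R y) = ginv F x y"
  by (simp add: ginv_def gmat_scale)

lemma homogeneous_sprayG: "homogeneous_T0 U 2 (sprayG F i)"
  unfolding homogeneous_T0_def
proof (intro ballI allI impI)
  fix x y c assume x: "x \<in> U" and y: "(y::real^'n) \<noteq> 0" and c: "(c::real) > 0"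
  have "homogeneous_T0 U (2 - 1) (dx k (dy j (\<lambda>x y. (F x y)\<^sup>2)))" for j k
    by (rule homogeneous_dx[OF open_U smooth_T0_dy[OF smooth_F2]
          homogeneous_dy[OF open_U smooth_F2 homogeneous_F2]])
  moreover have "homogeneous_T0 U 2 (dx j (\<lambda>x y. (F x y)\<^sup>2))" for j
    by (rule homogeneous_dx[OF open_U smooth_F2 homogeneous_F2])
  ultimately have "spray_rhs F j x (c *\<^sub>R y) = c\<^sup>2 * spray_rhs F j x y" for j
    using x y c unfolding homogeneous_T0_def
    by (simp add: spray_rhs_def sum_distrib_left right_diff_distrib power2_eq_square mult_ac)
  then show "sprayG F i x (c *\<^sub>R y) = c powr 2 * sprayG F i x y"
    using c by (simp add: sprayG_eq_spray_rhs ginv_scale[OF x y c] sum_distrib_left mult_ac)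
qed

lemma meanE_scale:
  assumes xy: "x \<in> U" "y \<noteq> 0" and c: "c > 0"
  shows "meanE F k j x (c *\<^sub>R y) = inverse c * meanE F k j x y"
proof -
  have "homogeneous_T0 U (2 - 1 - 1 - 1) (dy k (dy j (dy m (sprayG F m))))" for m
    by (intro homogeneous_dy[OF open_U] smooth_T0_dy smooth_sprayG homogeneous_sprayG)
  then have "dy k (dy j (dy m (sprayG F m))) x (c *\<^sub>R y)
      = c powr (-1) * dy k (dy j (dy m (sprayG F m))) x y" for m
    using xy c unfolding homogeneous_T0_def by simp
  then show ?thesis
    using c by (simp add: meanE_def berwald_def sum_distrib_left powr_minus mult_ac)
qed

lemma Emat_scale:
  assumes xy: "x \<in> U" "y \<noteq> 0" and c: "c > 0"
  shows "Emat F x (c *\<^sub>R y) = Emat F x y"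
proof -
  have F: "F x (c *\<^sub>R y) = c * F x y" using homogeneous_F xy c unfolding homogeneous_T0_def by simp
  have "Emat F x (c *\<^sub>R y) $ i $ j =
      2 * F x y * (c * inverse c) * (\<Sum>k\<in>UNIV. ginv F x y $ i $ k * meanE F k j x y)" for i j
    by (simp add: Emat_def F ginv_scale[OF xy c] meanE_scale[OF xy c] sum_distrib_left mult_ac)
  with c show ?thesis by (simp add: Emat_def vec_eq_iff)
qed

end

section \<open>The Lax equation for \<open>\<E>\<close> when \<open>\<chi> = 0\<close>\<close>

definition meanE_mat :: "'n::finite tfun \<Rightarrow> real^'n \<Rightarrow> real^'n \<Rightarrow> real^'n^'n" where
  "meanE_mat F x y = (\<chi> k j. meanE F k j x y)"

lemma Emat_eq_meanE_mat: "Emat F x y = (2 * F x y) *\<^sub>R (ginv F x y ** meanE_mat F x y)"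
  by (simp add: Emat_def meanE_mat_def matrix_matrix_mult_def vec_eq_iff)

context finsler_volume
begin

lemma smooth_Emat: "smooth_T0 U (\<lambda>x y. Emat F x y $ i $ j)"
  unfolding Emat_def by (simp, intro smooth_T0_intros smooth_F smooth_ginv smooth_meanE) simp

end

locale vanishing_chi = finsler_volume U F \<sigma> for U :: "(real^'n::finite) set" and F and \<sigma> +
  assumes chi_zero: "\<forall>i. \<forall>x\<in>U. \<forall>y. y \<noteq> 0 \<longrightarrow> chi \<sigma> F i x y = 0"
begin

lemma spray_meanE_mat:
  assumes xy: "x \<in> U" "y \<noteq> 0"
  shows "spray_mat F (meanE_mat F) x y =
    transpose (nonlinear_conn F x y) ** meanE_mat F x y + meanE_mat F x y ** nonlinear_conn F x y"
proof -
  interpret SP: derivation_at "\<lambda>f. spray F f x y" "smooth_T0 U" x y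
    by (rule derivation_spray[OF open_U xy])
  let ?S = "Sfun \<sigma> F"
  have hyp: "eq_on_T0 U (spray F (dy i ?S)) (dx i ?S)" for i
    using chi_zero by (simp add: eq_on_T0_def chi_def)
  have "spray F (\<lambda>x y. meanE F k j x y) x y =
      (\<Sum>l\<in>UNIV. dy k (sprayG F l) x y * meanE F l j x y) +
      (\<Sum>l\<in>UNIV. meanE F k l x y * dy j (sprayG F l) x y)" for k j
  proof -
    have a: "dy l (dy j ?S) x y = 2 * meanE F l j x y" for l
      by (simp add: meanE_eq_dy_dy_Sfun[OF xy])
    have b: "dy l (dy k ?S) x y = 2 * meanE F k l x y" for l
      using meanE_sym[OF xy, of k l] by (simp add: meanE_eq_dy_dy_Sfun[OF xy])
    have "spray F (\<lambda>x y. meanE F k j x y) x y = spray F (\<lambda>x y. 1/2 * dy k (dy j ?S) x y) x y"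
      by (rule spray_cong[OF xy]) (simp add: eq_on_T0_def meanE_eq_dy_dy_Sfun)
    also have "\<dots> = 1/2 * spray F (dy k (dy j ?S)) x y"
      by (rule SP.D_cmult) (intro smooth_T0_intros smooth_Sfun)
    finally show ?thesis
      by (simp add: spray_dy_dy[OF xy smooth_Sfun hyp] a b sum_distrib_left distrib_left mult_ac)
  qed
  then show ?thesis
    by (simp add: spray_mat_def meanE_mat_def vec_eq_iff matrix_matrix_mult_def nonlinear_conn_def
        transpose_def)
qed

text \<open>The symmetric transport laws of \<open>g\<^sup>-\<^sup>1\<close> and \<open>E\<close> combine into a commutator, and \<open>G(F) = 0\<close>
  lets the factor \<open>2F\<close> pass through.\<close>

lemma spray_Emat:
  assumes xy: "x \<in> U" "y \<noteq> 0"
  shows "spray_mat F (Emat F) x y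
      = Emat F x y ** nonlinear_conn F x y - nonlinear_conn F x y ** Emat F x y"
proof -
  interpret SP: derivation_at "\<lambda>f. spray F f x y" "smooth_T0 U" x y
    by (rule derivation_spray[OF open_U xy])
  let ?gi = "ginv F x y" and ?E = "meanE_mat F x y" and ?N = "nonlinear_conn F x y"
  have Cgi: "SP.C_mat (ginv F)" and CE: "SP.C_mat (meanE_mat F)"
    by (simp_all add: SP.C_mat_def smooth_ginv meanE_mat_def smooth_meanE)
  have "SP.D_mat (\<lambda>x y. ginv F x y ** meanE_mat F x y) =
      - (?gi ** transpose ?N + ?N ** ?gi) ** ?E + ?gi ** (transpose ?N ** ?E + ?E ** ?N)"
    using SP.D_mat_mult[OF Cgi CE] spray_ginv[OF xy] spray_meanE_mat[OF xy]
    by (simp add: D_mat_spray[OF SP.derivation_at_axioms])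
  also have "\<dots> = (?gi ** ?E) ** ?N - ?N ** (?gi ** ?E)"
    by (simp add: matrix_neg_lmult matrix_add_rdistrib matrix_diff_rdistrib matrix_add_ldistrib
        matrix_mul_assoc algebra_simps)
  finally have D: "SP.D_mat (\<lambda>x y. ginv F x y ** meanE_mat F x y)
      = (?gi ** ?E) ** ?N - ?N ** (?gi ** ?E)" .
  have C: "smooth_T0 U (\<lambda>x y. (ginv F x y ** meanE_mat F x y) $ i $ j)" for i j
    using SP.C_mat_mult[OF Cgi CE] by (simp add: SP.C_mat_def)
  have "spray F (\<lambda>x y. 2 * F x y) x y = 0"
    using SP.D_cmult[OF smooth_F, of 2] spray_F[OF xy] by simp
  then have "spray F (\<lambda>x y. Emat F x y $ i $ j) x y
      = 2 * F x y * SP.D_mat (\<lambda>x y. ginv F x y ** meanE_mat F x y) $ i $ j"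
    for i j
    using SP.D_mult[OF smooth_T0_cmult[OF open_U smooth_F, of 2] C[of i j]]
    by (simp add: Emat_eq_meanE_mat SP.D_mat_def)
  then show ?thesis
    by (simp add: spray_mat_def vec_eq_iff D Emat_eq_meanE_mat scalar_matrix_assoc[symmetric]
        matrix_scalar_ac right_diff_distrib)
qed

lemma spray_trace_matpow_Emat:
  assumes xy: "x \<in> U" "y \<noteq> 0"
  shows "spray F (\<lambda>x y. trace (matpow (Emat F x y) a)) x y = 0"
proof -
  interpret SP: derivation_at "\<lambda>f. spray F f x y" "smooth_T0 U" x y
    by (rule derivation_spray[OF open_U xy])
  show ?thesis
    by (rule SP.D_trace_matpow_commutator[where B = "nonlinear_conn F x y"])
       (simp_all add: SP.C_mat_def smooth_Emat D_mat_spray[OF SP.derivation_at_axioms] spray_Emat[OF xy])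
qed

lemma spray_det_Emat_shift:
  assumes xy: "x \<in> U" "y \<noteq> 0"
  shows "spray F (\<lambda>x y. det (Emat F x y + t *\<^sub>R mat 1)) x y = 0"
proof -
  interpret SP: derivation_at "\<lambda>f. spray F f x y" "smooth_T0 U" x y
    by (rule derivation_spray[OF open_U xy])
  let ?N = "nonlinear_conn F x y"
  have "SP.D_mat (\<lambda>x y. Emat F x y + t *\<^sub>R mat 1) = spray_mat F (Emat F) x y"
    by (simp add: SP.D_mat_def spray_mat_def vec_eq_iff mat_def SP.D_add[OF smooth_Emat]
        smooth_T0_const[OF open_U] SP.D_const)
  also have "\<dots> = (Emat F x y + t *\<^sub>R mat 1) ** ?N - ?N ** (Emat F x y + t *\<^sub>R mat 1)"
    by (simp add: spray_Emat[OF xy] matrix_add_ldistrib matrix_add_rdistrib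
        scalar_matrix_assoc[symmetric] matrix_scalar_ac)
  finally show ?thesis
    by (intro SP.D_det_commutator)
       (simp_all add: SP.C_mat_def mat_def smooth_Emat smooth_T0_add[OF open_U]
          smooth_T0_const[OF open_U])
qed

end

section \<open>Coefficients of the characteristic polynomial\<close>

lemma coeff_monom_sum:
  assumes "a \<le> n"
  shows "coeff (\<Sum>b\<le>n. monom (c b) (n - b)) (n - a) = c a"
proof -
  have "coeff (\<Sum>b\<le>n. monom (c b) (n - b)) (n - a) = (\<Sum>b\<le>n. if b = a then c b else 0)"
    unfolding coeff_sum coeff_monom by (rule sum.cong) (use assms in auto)
  then show ?thesis using assms by simp
qed

lemma power_sum_coeffs_unique:
  fixes c d :: "nat \<Rightarrow> 'a::{idom, ring_char_0}"
  assumes "\<forall>t. (\<Sum>b\<le>n. c b * t ^ (n - b)) = (\<Sum>b\<le>n. d b * t ^ (n - b))" "a \<le> n"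
  shows "c a = d a"
proof -
  have "poly (\<Sum>b\<le>n. monom (c b) (n - b)) = poly (\<Sum>b\<le>n. monom (d b) (n - b))"
    using assms(1) by (simp add: fun_eq_iff poly_sum poly_monom)
  then have "(\<Sum>b\<le>n. monom (c b) (n - b)) = (\<Sum>b\<le>n. monom (d b) (n - b))"
    by (simp add: poly_eq_poly_eq_iff)
  then show ?thesis using coeff_monom_sum[OF assms(2), of c] coeff_monom_sum[OF assms(2), of d] by simp
qed

lemma poly_det:
  "poly (det (M :: 'a::comm_ring_1 poly^'n::finite^'n)) t = det (\<chi> i j. poly (M $ i $ j) t)"
  by (simp add: det_def poly_sum poly_prod poly_of_int)

definition charpoly_Emat :: "'n::finite tfun \<Rightarrow> real^'n \<Rightarrow> real^'n \<Rightarrow> real poly" where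
  "charpoly_Emat F x y = det (\<chi> i j. [:Emat F x y $ i $ j, of_bool (i = j):])"

lemma poly_charpoly_Emat: "poly (charpoly_Emat F x y) t = det (Emat F x y + t *\<^sub>R mat 1)"
proof -
  have "(\<chi> i j. poly ((\<chi> i j. [:Emat F x y $ i $ j, of_bool (i = j):]) $ i $ j) t)
      = Emat F x y + t *\<^sub>R mat 1"
    by (simp add: vec_eq_iff mat_def)
  then show ?thesis by (simp add: charpoly_Emat_def poly_det)
qed

definition smooth_poly_T0 :: "(real^'n::finite) set \<Rightarrow> (real^'n \<Rightarrow> real^'n \<Rightarrow> real poly) \<Rightarrow> bool" where
  "smooth_poly_T0 U p \<longleftrightarrow> (\<forall>k. smooth_T0 U (\<lambda>x y. coeff (p x y) k))"

context
  fixes U :: "(real^'n::finite) set"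
  assumes open_U: "open U"
begin

lemma smooth_poly_T0_const: "smooth_poly_T0 U (\<lambda>x y. q)"
  by (simp add: smooth_poly_T0_def smooth_T0_const[OF open_U])

lemma smooth_poly_T0_add:
  "smooth_poly_T0 U p \<Longrightarrow> smooth_poly_T0 U q \<Longrightarrow> smooth_poly_T0 U (\<lambda>x y. p x y + q x y)"
  by (simp add: smooth_poly_T0_def smooth_T0_add[OF open_U])

lemma smooth_poly_T0_mult:
  "smooth_poly_T0 U p \<Longrightarrow> smooth_poly_T0 U q \<Longrightarrow> smooth_poly_T0 U (\<lambda>x y. p x y * q x y)"
  unfolding smooth_poly_T0_def coeff_mult
  by (intro allI smooth_T0_sum[OF open_U] smooth_T0_mult[OF open_U]) auto

lemma smooth_poly_T0_sum:
  "finite A \<Longrightarrow> (\<And>a. a \<in> A \<Longrightarrow> smooth_poly_T0 U (f a)) \<Longrightarrow> smooth_poly_T0 U (\<lambda>x y. \<Sum>a\<in>A. f a x y)"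
  by (induction A rule: finite_induct)
      (simp_all add: smooth_poly_T0_const[of 0, simplified] smooth_poly_T0_add)

lemma smooth_poly_T0_prod:
  "finite A \<Longrightarrow> (\<And>a. a \<in> A \<Longrightarrow> smooth_poly_T0 U (f a)) \<Longrightarrow> smooth_poly_T0 U (\<lambda>x y. \<Prod>a\<in>A. f a x y)"
  by (induction A rule: finite_induct)
      (simp_all add: smooth_poly_T0_const[of 1, simplified] smooth_poly_T0_mult)

lemma smooth_poly_T0_linear: "smooth_T0 U e \<Longrightarrow> smooth_poly_T0 U (\<lambda>x y. [:e x y, d:])"
  unfolding smooth_poly_T0_def
proof
  fix k assume e: "smooth_T0 U e"
  show "smooth_T0 U (\<lambda>x y. coeff [:e x y, d:] k)"
    by (cases k) (simp_all add: e smooth_T0_const[OF open_U])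
qed

lemma smooth_poly_T0_det:
  "(\<And>i j. smooth_poly_T0 U (\<lambda>x y. M x y $ i $ j)) \<Longrightarrow> smooth_poly_T0 U (\<lambda>x y. det (M x y))"
  unfolding det_def
  by (intro smooth_poly_T0_sum smooth_poly_T0_mult smooth_poly_T0_const smooth_poly_T0_prod)
     (auto simp: finite_permutations)

end

lemma (in finsler_volume) smooth_poly_charpoly_Emat: "smooth_poly_T0 U (charpoly_Emat F)"
  unfolding charpoly_Emat_def[abs_def]
  by (rule smooth_poly_T0_det[OF open_U]) (simp add: smooth_poly_T0_linear[OF open_U smooth_Emat])

context finsler_chart
begin

lemma charpoly_coeffs_scale:
  assumes charpoly: "\<forall>x\<in>U. \<forall>y. y \<noteq> 0 \<longrightarrow> (\<forall>\<Lambda>::real.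
      det (Emat F x y + \<Lambda> *\<^sub>R mat 1) = (\<Sum>a\<le>CARD('n). g a x y * \<Lambda> ^ (CARD('n) - a)))"
    and a: "a \<le> CARD('n)" and xy: "x \<in> U" "y \<noteq> 0" and c: "c > 0"
  shows "g a x (c *\<^sub>R y) = g a x y"
proof (rule power_sum_coeffs_unique[OF _ a], rule allI)
  fix t :: real
  have "c *\<^sub>R y \<noteq> 0" using c xy by simp
  then have "(\<Sum>b\<le>CARD('n). g b x (c *\<^sub>R y) * t ^ (CARD('n) - b))
      = det (Emat F x (c *\<^sub>R y) + t *\<^sub>R mat 1)"
    using charpoly xy by simp
  also have "\<dots> = (\<Sum>b\<le>CARD('n). g b x y * t ^ (CARD('n) - b))"
    using charpoly xy by (simp add: Emat_scale[OF xy c])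
  finally show "(\<Sum>b\<le>CARD('n). g b x (c *\<^sub>R y) * t ^ (CARD('n) - b)) =
      (\<Sum>b\<le>CARD('n). g b x y * t ^ (CARD('n) - b))" .
qed

end

context vanishing_chi
begin

lemma charpoly_coeffs_first_integral:
  assumes charpoly: "\<forall>x\<in>U. \<forall>y. y \<noteq> 0 \<longrightarrow> (\<forall>\<Lambda>::real.
      det (Emat F x y + \<Lambda> *\<^sub>R mat 1) = (\<Sum>a\<le>CARD('n). g a x y * \<Lambda> ^ (CARD('n) - a)))"
    and a: "a \<le> CARD('n)" and xy: "x \<in> U" "y \<noteq> 0"
  shows "spray F (g a) x y = 0"
proof -
  interpret SP: derivation_at "\<lambda>f. spray F f x y" "smooth_T0 U" x y
    by (rule derivation_spray[OF open_U xy])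
  have coeff_eq: "g b x y = coeff (charpoly_Emat F x y) (CARD('n) - b)"
    if "x \<in> U" "y \<noteq> 0" "b \<le> CARD('n)" for b x y
  proof -
    have "poly (charpoly_Emat F x y) = poly (\<Sum>b\<le>CARD('n). monom (g b x y) (CARD('n) - b))"
      using charpoly that by (simp add: fun_eq_iff poly_charpoly_Emat poly_sum poly_monom)
    then show ?thesis
      using coeff_monom_sum[OF that(3), of "\<lambda>b. g b x y"] by (simp add: poly_eq_poly_eq_iff)
  qed
  have smooth_g: "smooth_T0 U (g b)" if "b \<le> CARD('n)" for b
  proof (rule smooth_T0_cong[OF open_U])
    show "smooth_T0 U (\<lambda>x y. coeff (charpoly_Emat F x y) (CARD('n) - b))"
      using smooth_poly_charpoly_Emat by (simp add: smooth_poly_T0_def)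
    show "eq_on_T0 U (\<lambda>x y. coeff (charpoly_Emat F x y) (CARD('n) - b)) (g b)"
      using coeff_eq that by (simp add: eq_on_T0_def)
  qed
  have "(\<Sum>b\<le>CARD('n). spray F (g b) x y * t ^ (CARD('n) - b)) = (\<Sum>b\<le>CARD('n). 0 * t ^ (CARD('n) - b))"
    for t :: real
  proof -
    have "(\<Sum>b\<le>CARD('n). spray F (g b) x y * t ^ (CARD('n) - b)) =
        (\<Sum>b\<le>CARD('n). spray F (\<lambda>x y. g b x y * t ^ (CARD('n) - b)) x y)"
      by (rule sum.cong[OF refl])
          (simp add: SP.D_mult[OF smooth_g smooth_T0_const[OF open_U]] SP.D_const)
    also have "\<dots> = spray F (\<lambda>x y. \<Sum>b\<le>CARD('n). g b x y * t ^ (CARD('n) - b)) x y"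
      by (rule SP.D_sum[symmetric])
          (auto intro!: smooth_T0_mult[OF open_U] smooth_g smooth_T0_const[OF open_U])
    also have "\<dots> = spray F (\<lambda>x y. det (Emat F x y + t *\<^sub>R mat 1)) x y"
      by (rule spray_cong[OF xy]) (use charpoly in \<open>simp add: eq_on_T0_def\<close>)
    finally show ?thesis using spray_det_Emat_shift[OF xy] by simp
  qed
  then show ?thesis by (rule power_sum_coeffs_unique[OF allI a])
qed

end

theorem theorem1p1:
  fixes U :: "(real^'n::finite) set"
    and F :: "'n tfun"
    and \<sigma> :: "real^'n \<Rightarrow> real"
    and ga :: "nat \<Rightarrow> 'n tfun"
  assumes n2: "CARD('n) \<ge> 2"
    and fin: "finsler U F"
    and sigma_pos: "\<forall>x\<in>U. \<sigma> x > 0"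
    and sigma_smooth: "smooth_T0 U (\<lambda>x y. \<sigma> x)"
    and chi0: "\<forall>i. \<forall>x\<in>U. \<forall>y. y \<noteq> 0 \<longrightarrow> chi \<sigma> F i x y = 0"
    and charpoly: "\<forall>x\<in>U. \<forall>y. y \<noteq> 0 \<longrightarrow> (\<forall>\<Lambda>::real.
        det (Emat F x y + \<Lambda> *\<^sub>R mat 1) = (\<Sum>a\<le>CARD('n). ga a x y * \<Lambda> ^ (CARD('n) - a)))"
  shows "\<forall>a\<in>{1..CARD('n) - 1}. \<forall>x\<in>U. \<forall>y. y \<noteq> 0 \<longrightarrow>
           spray F (\<lambda>x y. trace (matpow (Emat F x y) a)) x y = 0
         \<and> spray F (ga a) x y = 0
         \<and> (\<forall>c>0. trace (matpow (Emat F x (c *\<^sub>R y)) a) = trace (matpow (Emat F x y) a)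
                  \<and> ga a x (c *\<^sub>R y) = ga a x y)"
proof -
  interpret vanishing_chi U F \<sigma>
    by unfold_locales (fact fin sigma_pos sigma_smooth chi0)+
  show ?thesis
    using spray_trace_matpow_Emat charpoly_coeffs_first_integral[OF charpoly]
      Emat_scale charpoly_coeffs_scale[OF charpoly]
    by auto
qed

end
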